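(* Let $X$ be a connected, finite, simple $3$-valent (resp. $4$-valent) graph equipped with an orientation at each vertex, and for $k\geq 1$ let $X_k=\mathrm{GC}_{k,0}(X)$ be its Goldberg–Coxeter construction with parameters $(k,0)$, with $N_k=|V(X_k)|$ and Laplacian eigenvalues $\lambda_1(X_k)\leq\cdots\leq\lambda_{N_k}(X_k)$. Then for any sequence of positive integers $(m_k)_{k\geq1}$ with $m_k/k^2\to 0$ as $k\to\infty$, the first $m_k$ eigenvalues of $\Delta_{X_k}$ tend to $0$, i.e. $\lambda_{m_k}(X_k)\to 0$, and the last $m_k$ eigenvalues tend to $6$ (resp. $8$), i.e. $\lambda_{N_k-m_k+1}(X_k)\to 6$ in the $3$-valent case (resp. $\to 8$ in the $4$-valent case), as $k\to\infty$.
   Context: Graphs are connected, finite and simple. For a graph $Y$ the (combinatorial) Laplacian acts on $f\in\mathbb{C}^{V(Y)}$ by $(\Delta_Y f)(p)=\deg(p)f(p)-\sum_{q\sim p}f(q)$; its eigenvalues are listed with multiplicity in nondecreasing order. An orientation at each vertex of a $3$- or $4$-valent graph is a cyclic ordering of the edges emanating from each vertex. Goldberg–Coxeter construction ($3$-valent case): let $\omega=e^{\pi i/3}$, so $\mathbb{Z}[\omega]\subset\mathbb{C}$ is the triangular lattice, whose unit triangles are the upward triangles with vertices $a+b\omega,\ a+1+b\omega,\ a+(b+1)\omega$ and the downward triangles with vertices $a+b\omega,\ a+(b+1)\omega,\ a-1+(b+1)\omega$ ($a,b\in\mathbb{Z}$). For $(k,l)\in\mathbb{Z}^2\setminus\{(0,0)\}$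 put $z=k+l\omega$ and let $T$ be the triangle with vertices $0,z,\omega z$. For each $p\in V(X)$ take a copy $\overline{\triangle}(p)$ of the graph whose vertices are the barycenters of the unit lattice triangles meeting the interior of $T$, two barycenters being adjacent when the triangles share an edge; the three sides of $T$ are matched with the three edges at $p$ so that the given cyclic order at $p$ agrees with the counterclockwise order of the sides. For each edge $e=pq$ of $X$, place $\overline{\triangle}(p)$ on $T$ with $e$ corresponding to the side from $z$ to $\omega z$, and place $\overline{\triangle}(q)$ (preserving orientation) on the triangle with vertices $z,(1+\omega)z,\omega z$ with $e$ corresponding to the side from $\omega z$ to $z$; then identify all overlapping vertices and edges. The resulting $3$-valent graph is $\mathrm{GC}_{k,l}(X)$. ($4$-valent case): the same with $\mathbb{Z}[i]$ (square lattice with unit squares), $z=k+li$, the square $S$ with vertices $0,z,(1+i)z,iz$ in place of $T$, barycenters of unit squares meeting the interior of $S$, and for an edge $pq$ the piece of $q$ placed on the adjacent square across the side from $z$ to $(1+i)z$; the result is a $4$-valent graph $\mathrm{GC}_{k,l}(X)$. In particular $\mathrm{GC}_{k,0}(X)$ has $k^2|V(X)|$ vertices. *)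

theory Defs
  imports "Jordan_Normal_Form.Char_Poly" "HOL-Library.Product_Lexorder"
begin

definition simple_graph :: "'a set \<Rightarrow> ('a \<Rightarrow> 'a \<Rightarrow> bool) \<Rightarrow> bool" where
  "simple_graph V E \<longleftrightarrow> finite V \<and> (\<forall>x y. E x y \<longrightarrow> x \<in> V \<and> y \<in> V)
     \<and> (\<forall>x y. E x y \<longrightarrow> E y x) \<and> (\<forall>x. \<not> E x x)"

definition connected_graph :: "'a set \<Rightarrow> ('a \<Rightarrow> 'a \<Rightarrow> bool) \<Rightarrow> bool" where
  "connected_graph V E \<longleftrightarrow> V \<noteq> {} \<and> (\<forall>x\<in>V. \<forall>y\<in>V. E\<^sup>*\<^sup>* x y)"

text \<open>A d-valent graph with an orientation at each vertex: rot p 0, ..., rot p (d-1)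
lists the neighbours of p (each exactly once) in the given cyclic order
(a representative of the cyclic ordering).\<close>
definition oriented_regular :: "nat \<Rightarrow> 'a set \<Rightarrow> ('a \<Rightarrow> 'a \<Rightarrow> bool) \<Rightarrow> ('a \<Rightarrow> nat \<Rightarrow> 'a) \<Rightarrow> bool" where
  "oriented_regular d V E rot \<longleftrightarrow> simple_graph V E \<and> connected_graph V E
     \<and> (\<forall>p\<in>V. bij_betw (rot p) {..<d} {q. E p q})"

text \<open>Generic gluing: each vertex p of X gets a copy of a piece (cells with inner
adjacency cadj); side s (s < d, sides numbered counterclockwise) of the piece of p
corresponds to the edge from p to rot p s.  bnd s i is the cell of the piece lying
along side s at position i (i < k, counted counterclockwise along the side).
Gluing the piece of q to that of p along the common edge, orientation preserving,
reverses the position along the shared side.\<close>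
definition gc_adj ::
  "nat \<Rightarrow> nat \<Rightarrow> 'a set \<Rightarrow> ('a \<Rightarrow> nat \<Rightarrow> 'a) \<Rightarrow> 'c set \<Rightarrow> ('c \<Rightarrow> 'c \<Rightarrow> bool)
     \<Rightarrow> (nat \<Rightarrow> nat \<Rightarrow> 'c) \<Rightarrow> ('a \<times> 'c) \<Rightarrow> ('a \<times> 'c) \<Rightarrow> bool" where
  "gc_adj d k V rot cells cadj bnd x y \<longleftrightarrow>
     fst x \<in> V \<and> fst y \<in> V \<and> snd x \<in> cells \<and> snd y \<in> cells \<and>
     ((fst x = fst y \<and> cadj (snd x) (snd y)) \<or>
      (\<exists>s<d. \<exists>s'<d. \<exists>i<k. rot (fst x) s = fst y \<and> rot (fst y) s' = fst x \<and>
          snd x = bnd s i \<and> snd y = bnd s' (k - 1 - i)))"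

text \<open>Lattice point a + b*omega is encoded as (a,b).  The cell (a,b,True) is the upward
unit triangle with vertices a+b\<omega>, a+1+b\<omega>, a+(b+1)\<omega>; the cell (a,b,False)
is the downward triangle with vertices a+b\<omega>, a+(b+1)\<omega>, a-1+(b+1)\<omega>.\<close>
fun tri_verts :: "int \<times> int \<times> bool \<Rightarrow> (int \<times> int) set" where
  "tri_verts (a, b, True) = {(a, b), (a + 1, b), (a, b + 1)}"
| "tri_verts (a, b, False) = {(a, b), (a, b + 1), (a - 1, b + 1)}"

text \<open>Closed triangle T with vertices 0, k, k\<omega>.  For l = 0 the unit triangles
meeting the interior of T are exactly those contained in T.\<close>
definition tri_T :: "nat \<Rightarrow> (int \<times> int) set" where
  "tri_T k = {(x, y). 0 \<le> x \<and> 0 \<le> y \<and> x + y \<le> int k}"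

definition tri_cells :: "nat \<Rightarrow> (int \<times> int \<times> bool) set" where
  "tri_cells k = {t. tri_verts t \<subseteq> tri_T k}"

definition tri_adj :: "int \<times> int \<times> bool \<Rightarrow> int \<times> int \<times> bool \<Rightarrow> bool" where
  "tri_adj t t' \<longleftrightarrow> t \<noteq> t' \<and> card (tri_verts t \<inter> tri_verts t') = 2"

text \<open>Boundary cells: side 0 is from 0 to k, side 1 from k to k\<omega>, side 2 from k\<omega> to 0.\<close>
definition tri_bnd :: "nat \<Rightarrow> nat \<Rightarrow> nat \<Rightarrow> int \<times> int \<times> bool" where
  "tri_bnd k s i =
     (if s = 0 then (int i, 0, True)
      else if s = 1 then (int k - 1 - int i, int i, True)
      else (0, int k - 1 - int i, True))"

definition GC3_vertices :: "nat \<Rightarrow> 'a set \<Rightarrow> ('a \<times> (int \<times> int \<times> bool)) set" where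
  "GC3_vertices k V = V \<times> tri_cells k"

definition GC3_adj :: "nat \<Rightarrow> 'a set \<Rightarrow> ('a \<Rightarrow> nat \<Rightarrow> 'a)
    \<Rightarrow> ('a \<times> (int \<times> int \<times> bool)) \<Rightarrow> ('a \<times> (int \<times> int \<times> bool)) \<Rightarrow> bool" where
  "GC3_adj k V rot = gc_adj 3 k V rot (tri_cells k) tri_adj (tri_bnd k)"

text \<open>Cell (a,b) is the unit square with lower left corner a + b i.\<close>
definition sq_cells :: "nat \<Rightarrow> (int \<times> int) set" where
  "sq_cells k = {(a, b). 0 \<le> a \<and> a < int k \<and> 0 \<le> b \<and> b < int k}"

definition sq_adj :: "int \<times> int \<Rightarrow> int \<times> int \<Rightarrow> bool" where
  "sq_adj c c' \<longleftrightarrow> \<bar>fst c - fst c'\<bar> + \<bar>snd c - snd c'\<bar> = 1"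

text \<open>Sides: 0 from 0 to k, 1 from k to (1+i)k, 2 from (1+i)k to ik, 3 from ik to 0.\<close>
definition sq_bnd :: "nat \<Rightarrow> nat \<Rightarrow> nat \<Rightarrow> int \<times> int" where
  "sq_bnd k s i =
     (if s = 0 then (int i, 0)
      else if s = 1 then (int k - 1, int i)
      else if s = 2 then (int k - 1 - int i, int k - 1)
      else (0, int k - 1 - int i))"

definition GC4_vertices :: "nat \<Rightarrow> 'a set \<Rightarrow> ('a \<times> (int \<times> int)) set" where
  "GC4_vertices k V = V \<times> sq_cells k"

definition GC4_adj :: "nat \<Rightarrow> 'a set \<Rightarrow> ('a \<Rightarrow> nat \<Rightarrow> 'a)
    \<Rightarrow> ('a \<times> (int \<times> int)) \<Rightarrow> ('a \<times> (int \<times> int)) \<Rightarrow> bool" where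
  "GC4_adj k V rot = gc_adj 4 k V rot (sq_cells k) sq_adj (sq_bnd k)"

definition laplacian_mat :: "'v::linorder set \<Rightarrow> ('v \<Rightarrow> 'v \<Rightarrow> bool) \<Rightarrow> real mat" where
  "laplacian_mat W A =
     (let vs = sorted_list_of_set W in
      mat (card W) (card W) (\<lambda>(i, j).
        if i = j then real (card {z \<in> W. A (vs ! i) z})
        else if A (vs ! i) (vs ! j) then -1 else 0))"

definition lap_eigs :: "'v::linorder set \<Rightarrow> ('v \<Rightarrow> 'v \<Rightarrow> bool) \<Rightarrow> real list" where
  "lap_eigs W A = (THE xs. sorted xs \<and>
      char_poly (laplacian_mat W A) = (\<Prod>x\<leftarrow>xs. [:- x, 1:]))"

text \<open>The j-th eigenvalue (1-indexed) \<lambda>_j.\<close>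
definition lap_eig :: "'v::linorder set \<Rightarrow> ('v \<Rightarrow> 'v \<Rightarrow> bool) \<Rightarrow> nat \<Rightarrow> real" where
  "lap_eig W A j = lap_eigs W A ! (j - 1)"

end

theory Submission
  imports Defs
begin

text \<open>The Laplacian of a graph of maximal degree \<open>d\<close> has its spectrum in \<open>[0, 2d]\<close>, and by the
  Courant--Fischer principle \<open>\<lambda>\<^sub>m \<le> \<epsilon>\<close> as soon as there are \<open>m\<close> test functions with pairwise
  disjoint, non-adjacent supports whose Rayleigh quotients are at most \<open>\<epsilon>\<close>; dually
  \<open>\<lambda>\<^sub>N\<^sub>-\<^sub>m\<^sub>+\<^sub>1 \<ge> 2d - \<epsilon>\<close> if the quotients are at least \<open>2d - \<epsilon>\<close>.
  Inside the piece of a single vertex, \<open>GC\<^sub>k\<^sub>,\<^sub>0(X)\<close> is a piece of the square (resp.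
  triangular) lattice of side \<open>k\<close>, which is bipartite. On a block of \<open>R \<times> R\<close> lattice cells, the
  indicator function has Rayleigh quotient \<open>O(1/R)\<close> and the indicator times the bipartite
  \<open>\<pm>1\<close> colouring has quotient \<open>2d - O(1/R)\<close>, since only the \<open>O(R)\<close> edges leaving the block
  contribute the error. Blocks on a grid of mesh \<open>R + 2\<close> are non-adjacent, and about
  \<open>(k / 2(R + 2))\<^sup>2\<close> of them fit; since \<open>m\<^sub>k / k\<^sup>2 \<rightarrow> 0\<close>, for every \<open>R\<close> eventually
  \<open>m\<^sub>k\<close> of them fit, which gives both limits.\<close>

section \<open>Spectral theorem for real symmetric matrices\<close>

lemma symmetric_real_mat_complex_eigenvalue_real:
  fixes A :: "real mat"
  assumes A: "A \<in> carrier_mat n n" and sym: "A\<^sup>T = A"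
    and v: "v \<in> carrier_vec n" "v \<noteq> 0\<^sub>v n"
    and Av: "map_mat complex_of_real A *\<^sub>v v = a \<cdot>\<^sub>v v"
  shows "cnj a = a"
proof -
  let ?C = "map_mat complex_of_real A"
  have Asym: "\<And>i j. i < n \<Longrightarrow> j < n \<Longrightarrow> A $$ (i,j) = A $$ (j,i)"
    by (metis A carrier_matD(1,2) index_transpose_mat(1) sym)
  define s where "s = (\<Sum>i<n. cnj (v$i) * (?C *\<^sub>v v)$i)"
  define N where "N = (\<Sum>i<n. cnj (v$i) * v$i)"
  have s_eigen: "s = a * N" unfolding s_def N_def Av using v
    by (simp add: sum_distrib_left algebra_simps)
  have s_entries: "s = (\<Sum>i<n. \<Sum>j<n. cnj (v$i) * of_real (A $$ (i,j)) * v$j)"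
    unfolding s_def using A v
    by (simp add: scalar_prod_def sum_distrib_left algebra_simps atLeast0LessThan)
  have "cnj s = (\<Sum>i<n. \<Sum>j<n. v$i * of_real (A $$ (i,j)) * cnj (v$j))"
    unfolding s_entries by (simp add: cnj_sum)
  also have "\<dots> = (\<Sum>j<n. \<Sum>i<n. v$i * of_real (A $$ (i,j)) * cnj (v$j))"
    by (rule sum.swap)
  also have "\<dots> = s" unfolding s_entries
    by (intro sum.cong refl, simp add: Asym mult.commute mult.left_commute)
  finally have s_real: "cnj s = s" .
  have N_real: "cnj N = N" unfolding N_def by (simp add: cnj_sum mult.commute)
  have "N \<noteq> 0"
  proof
    assume "N = 0"
    have "Re N = (\<Sum>i<n. (cmod (v$i))\<^sup>2)" unfolding N_def
      by (simp add: Re_sum complex_mult_cnj[symmetric] cmod_power2, simp add: power2_eq_square)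
    hence "(\<Sum>i<n. (cmod (v$i))\<^sup>2) = 0" using \<open>N = 0\<close> by simp
    hence "\<forall>i\<in>{..<n}. (cmod (v$i))\<^sup>2 = 0" by (subst (asm) sum_nonneg_eq_0_iff) auto
    hence "v = 0\<^sub>v n" using v by (intro eq_vecI) auto
    with v show False by simp
  qed
  moreover have "cnj a * N = a * N" using s_real N_real unfolding s_eigen by (metis complex_cnj_mult)
  ultimately show ?thesis by simp
qed

lemma symmetric_real_mat_has_eigenvalue:
  fixes A :: "real mat"
  assumes A: "A \<in> carrier_mat n n" and sym: "A\<^sup>T = A" and n: "0 < n"
  obtains e where "eigenvalue A e"
proof -
  let ?C = "map_mat complex_of_real A"
  have C: "?C \<in> carrier_mat n n" using A by auto
  obtain as where cp: "char_poly ?C = (\<Prod>a\<leftarrow>as. [:- a, 1:])" and len: "length as = n"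
    using char_poly_factorized[OF C] by blast
  obtain a rest where as: "as = a # rest" using len n by (cases as) auto
  have root: "poly (char_poly ?C) a = 0" unfolding cp as by simp
  hence "eigenvalue ?C a" using eigenvalue_root_char_poly[OF C] by simp
  then obtain v where "eigenvector ?C v a" unfolding eigenvalue_def by blast
  hence "cnj a = a"
    using symmetric_real_mat_complex_eigenvalue_real[OF A sym] C unfolding eigenvector_def by auto
  hence a_real: "a = of_real (Re a)" by (metis Reals_cnj_iff complex_is_Real_iff of_real_Re)
  have "poly (map_poly of_real (char_poly A)) (of_real (Re a)) = (0::complex)"
    using root a_real of_real_hom.char_poly_hom[OF A] by metis
  hence "poly (char_poly A) (Re a) = 0" by (simp add: of_real_hom.poly_map_poly)
  thus ?thesis using eigenvalue_root_char_poly[OF A] that by blast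
qed

text \<open>The Householder reflection \<open>I - 2 w w\<^sup>T / (w \<bullet> w)\<close> with \<open>w = v - e\<^sub>0\<close>; the sign
  condition on \<open>v $ 0\<close> keeps \<open>w\<close> away from \<open>0\<close>.\<close>
lemma householder_reflection:
  fixes v :: "real vec"
  assumes v: "v \<in> carrier_vec n" and u: "v \<bullet> v = 1" and v0: "v$0 \<le> 0" and n: "0 < n"
  obtains H where "H \<in> carrier_mat n n" "H\<^sup>T = H" "H * H = 1\<^sub>m n" "col H 0 = v"
proof -
  define w where "w = vec n (\<lambda>i. v$i - (if i = 0 then 1 else 0))"
  have wi: "\<And>i. i < n \<Longrightarrow> w$i = v$i - (if i = 0 then 1 else 0)" unfolding w_def by simp
  have vv: "(\<Sum>i<n. v$i * v$i) = 1" using u v by (simp add: scalar_prod_def atLeast0LessThan)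
  define S where "S = (\<Sum>i<n. w$i * w$i)"
  have "S = (\<Sum>i<n. v$i * v$i - 2 * (if i = 0 then v$i else 0) + (if i = 0 then 1 else 0))"
    unfolding S_def by (intro sum.cong refl, simp add: wi algebra_simps)
  also have "\<dots> = 2 - 2 * v$0" using n
    by (simp add: sum.distrib sum_subtractf vv sum_distrib_left[symmetric])
  finally have S: "S = 2 - 2 * v$0" .
  define c where "c = 2 / S"
  have S_pos: "S > 0" using S v0 by simp
  have cS: "c * S = 2" using S_pos unfolding c_def by simp
  have cw0: "c * w$0 = -1" using n S_pos unfolding c_def wi[OF n] S by (simp add: field_simps)
  define H where "H = mat n n (\<lambda>(i,j). (if i = j then 1 else 0) - c * w$i * w$j)"
  have H: "H \<in> carrier_mat n n" unfolding H_def by simp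
  have Hij: "\<And>i j. i < n \<Longrightarrow> j < n \<Longrightarrow> H $$ (i,j) = (if i = j then 1 else 0) - c * w$i * w$j"
    unfolding H_def by simp
  have "H\<^sup>T = H" by (rule eq_matI, insert H, auto simp: Hij)
  moreover have "H * H = 1\<^sub>m n"
  proof (rule eq_matI)
    fix i j assume "i < dim_row (1\<^sub>m n)" and "j < dim_col (1\<^sub>m n)"
    hence i: "i < n" and j: "j < n" by auto
    have "(H * H) $$ (i,j) = (\<Sum>k<n. H $$ (i,k) * H $$ (k,j))"
      using H i j by (simp add: scalar_prod_def atLeast0LessThan)
    also have "\<dots> = (\<Sum>k<n. (if k = i then (if k = j then 1 else 0) else 0)
        - (if k = j then c * w$i * w$j else 0) - (if k = i then c * w$i * w$j else 0)
        + c * c * w$i * w$j * (w$k * w$k))"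
      by (intro sum.cong refl, simp add: Hij i j algebra_simps)
    also have "\<dots> = (if i = j then 1 else 0) - c * w$i * w$j - c * w$i * w$j + c * c * w$i * w$j * S"
      using i j unfolding S_def
      by (simp add: sum.distrib sum_subtractf sum_distrib_left[symmetric])
    also have "\<dots> = (if i = j then 1 else 0)"
      using cS by (simp add: algebra_simps)
    finally show "(H * H) $$ (i,j) = 1\<^sub>m n $$ (i,j)" using i j by simp
  qed (insert H, auto)
  moreover have "col H 0 = v"
  proof (rule eq_vecI)
    fix i assume "i < dim_vec v"
    hence i: "i < n" using v by auto
    have "col H 0 $ i = (if i = 0 then 1 else 0) - (c * w$0) * w$i"
      using H i n by (simp add: Hij algebra_simps)
    also have "\<dots> = v$i" unfolding cw0 using i by (simp add: wi)
    finally show "col H 0 $ i = v $ i" .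
  qed (insert H v, auto)
  ultimately show ?thesis using H that by blast
qed

lemma unit_eigenvector:
  fixes A :: "real mat"
  assumes A: "A \<in> carrier_mat n n" and e: "eigenvalue A e"
  obtains u where "u \<in> carrier_vec n" "u \<bullet> u = 1" "u$0 \<le> 0" "A *\<^sub>v u = e \<cdot>\<^sub>v u"
proof -
  define v where "v = find_eigenvector A e"
  have "eigenvector A v e" unfolding v_def by (rule find_eigenvector[OF A e])
  hence v: "v \<in> carrier_vec n" and v0: "v \<noteq> 0\<^sub>v n" and Av: "A *\<^sub>v v = e \<cdot>\<^sub>v v"
    using A unfolding eigenvector_def by auto
  obtain i where i: "i < n" and vi: "v$i \<noteq> 0"
    using v v0 by (metis eq_vecI carrier_vecD index_zero_vec)
  have "(v$i)\<^sup>2 \<le> (\<Sum>i<n. (v$i)\<^sup>2)" using i by (intro member_le_sum) auto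
  moreover have "v \<bullet> v = (\<Sum>i<n. (v$i)\<^sup>2)"
    using v by (simp add: scalar_prod_def atLeast0LessThan power2_eq_square)
  ultimately have vpos: "v \<bullet> v > 0" using vi by (smt (verit) zero_less_power2)
  define s where "s = (if v$0 \<le> 0 then 1 else -1) / sqrt (v \<bullet> v)"
  define u where "u = s \<cdot>\<^sub>v v"
  have "s * s * (v \<bullet> v) = 1" unfolding s_def using vpos by (simp add: field_simps)
  hence "u \<bullet> u = 1" unfolding u_def using v
    by (simp add: smult_scalar_prod_distrib scalar_prod_smult_distrib mult.assoc)
  moreover have "u$0 \<le> 0"
    using i v vpos unfolding u_def s_def by (auto simp: divide_nonpos_pos)
  moreover have "A *\<^sub>v u = e \<cdot>\<^sub>v u" unfolding u_def using A v Av
    by (simp add: mult_mat_vec smult_smult_assoc mult.commute)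
  moreover have "u \<in> carrier_vec n" unfolding u_def using v by simp
  ultimately show ?thesis using that by blast
qed

text \<open>Conjugating by the Householder reflection that maps \<open>e\<^sub>0\<close> to a unit eigenvector splits off
  a \<open>1 \<times> 1\<close> block.\<close>
lemma symmetric_real_mat_deflation:
  fixes A :: "real mat"
  assumes A: "A \<in> carrier_mat (Suc n) (Suc n)" and sym: "A\<^sup>T = A"
  obtains H e A' where "H \<in> carrier_mat (Suc n) (Suc n)" "H\<^sup>T = H" "H * H = 1\<^sub>m (Suc n)"
    "A' \<in> carrier_mat n n" "A'\<^sup>T = A'"
    "H * A * H = four_block_mat (mat 1 1 (\<lambda>_. e)) (0\<^sub>m 1 n) (0\<^sub>m n 1) A'"
proof -
  let ?n = "Suc n"
  obtain e where e: "eigenvalue A e" using symmetric_real_mat_has_eigenvalue[OF A sym] by auto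
  obtain u where u: "u \<in> carrier_vec ?n" and uu: "u \<bullet> u = 1" and u0: "u$0 \<le> 0"
    and Au: "A *\<^sub>v u = e \<cdot>\<^sub>v u" using unit_eigenvector[OF A e] by blast
  obtain H where H: "H \<in> carrier_mat ?n ?n" and HT: "H\<^sup>T = H" and HH: "H * H = 1\<^sub>m ?n"
    and Hu: "col H 0 = u" using householder_reflection[OF u uu u0] by auto
  define B where "B = H * A * H"
  have B: "B \<in> carrier_mat ?n ?n" unfolding B_def using H A by auto
  have "B\<^sup>T = H\<^sup>T * (H * A)\<^sup>T" unfolding B_def using H A
    by (intro transpose_mult[of _ ?n ?n]) auto
  also have "(H * A)\<^sup>T = A\<^sup>T * H\<^sup>T" using H A by (intro transpose_mult[of _ ?n ?n]) auto
  finally have "B\<^sup>T = B" unfolding B_def HT sym using H A by (simp add: assoc_mult_mat[of _ ?n ?n])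
  hence Bsym: "\<And>i j. i < ?n \<Longrightarrow> j < ?n \<Longrightarrow> B $$ (i,j) = B $$ (j,i)"
    by (metis B carrier_matD(1,2) index_transpose_mat(1))
  have "col B 0 = (H * A) *\<^sub>v col H 0" unfolding B_def using H A
    by (intro col_mult2[of _ ?n ?n]) auto
  also have "\<dots> = e \<cdot>\<^sub>v (H *\<^sub>v col H 0)"
    unfolding Hu using H A u Au by (simp add: assoc_mult_mat_vec mult_mat_vec)
  also have "H *\<^sub>v col H 0 = unit_vec ?n 0" using col_mult2[OF H H, of 0] HH by simp
  finally have colB: "col B 0 = e \<cdot>\<^sub>v unit_vec ?n 0" .
  have B0: "B $$ (i,0) = (if i = 0 then e else 0)" if i: "i < ?n" for i
  proof -
    have "B $$ (i,0) = col B 0 $ i" using B i by simp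
    also have "\<dots> = (if i = 0 then e else 0)" unfolding colB using i by simp
    finally show ?thesis .
  qed
  define A' where "A' = mat n n (\<lambda>(i,j). B $$ (Suc i, Suc j))"
  have A': "A' \<in> carrier_mat n n" unfolding A'_def by simp
  have "A'\<^sup>T = A'" using Bsym by (intro eq_matI) (auto simp: A'_def)
  moreover have "B = four_block_mat (mat 1 1 (\<lambda>_. e)) (0\<^sub>m 1 n) (0\<^sub>m n 1) A'"
  proof (rule eq_matI)
    fix i j assume "i < dim_row (four_block_mat (mat 1 1 (\<lambda>_. e)) (0\<^sub>m 1 n) (0\<^sub>m n 1) A')"
      and "j < dim_col (four_block_mat (mat 1 1 (\<lambda>_. e)) (0\<^sub>m 1 n) (0\<^sub>m n 1) A')"
    hence i: "i < ?n" and j: "j < ?n" using A' by auto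
    show "B $$ (i,j) = four_block_mat (mat 1 1 (\<lambda>_. e)) (0\<^sub>m 1 n) (0\<^sub>m n 1) A' $$ (i,j)"
    proof (cases "i = 0 \<or> j = 0")
      case True
      thus ?thesis using B0[of i] B0[of j] Bsym[of 0 j] i j A' by auto
    next
      case False
      then obtain i' j' where "i = Suc i'" "j = Suc j'" by (metis not0_implies_Suc)
      thus ?thesis using i j A' by (simp add: A'_def)
    qed
  qed (use B A' in auto)
  ultimately show ?thesis using H HT HH A' that unfolding B_def by blast
qed

theorem symmetric_real_mat_orthogonally_diagonalizable:
  fixes A :: "real mat"
  assumes "A \<in> carrier_mat n n" and "A\<^sup>T = A"
  shows "\<exists>U D. U \<in> carrier_mat n n \<and> D \<in> carrier_mat n n \<and> U\<^sup>T * U = 1\<^sub>m n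
     \<and> diagonal_mat D \<and> U\<^sup>T * A * U = D"
  using assms
proof (induction n arbitrary: A)
  case 0
  show ?case
    by (rule exI[of _ "1\<^sub>m 0"], rule exI[of _ "0\<^sub>m 0 0"])
      (use 0 in \<open>auto simp: diagonal_mat_def intro!: eq_matI\<close>)
next
  case (Suc n)
  let ?n = "Suc n"
  have A: "A \<in> carrier_mat ?n ?n" using Suc.prems by auto
  obtain H e A' where H: "H \<in> carrier_mat ?n ?n" and HT: "H\<^sup>T = H" and HH: "H * H = 1\<^sub>m ?n"
    and A': "A' \<in> carrier_mat n n" "A'\<^sup>T = A'"
    and HAH: "H * A * H = four_block_mat (mat 1 1 (\<lambda>_. e)) (0\<^sub>m 1 n) (0\<^sub>m n 1) A'"
    using symmetric_real_mat_deflation[OF A Suc.prems(2)] by blast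
  obtain U' D' where U': "U' \<in> carrier_mat n n" and D': "D' \<in> carrier_mat n n"
    and UU': "U'\<^sup>T * U' = 1\<^sub>m n" and dD': "diagonal_mat D'" and UAU': "U'\<^sup>T * A' * U' = D'"
    using Suc.IH[OF A'] by blast
  define E where "E = mat 1 1 (\<lambda>_. e)"
  have E: "E \<in> carrier_mat 1 1" unfolding E_def by simp
  define P where "P = four_block_mat (1\<^sub>m 1) (0\<^sub>m 1 n) (0\<^sub>m n 1) U'"
  have P: "P \<in> carrier_mat ?n ?n" unfolding P_def using U' by auto
  have PT: "P\<^sup>T = four_block_mat (1\<^sub>m 1) (0\<^sub>m 1 n) (0\<^sub>m n 1) U'\<^sup>T"
    unfolding P_def using U' by (simp add: transpose_four_block_mat[of _ 1 1 _ n _ n])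
  define U where "U = H * P"
  have UT: "U\<^sup>T = P\<^sup>T * H" unfolding U_def using H P HT by (simp add: transpose_mult[of _ ?n ?n])
  have "P\<^sup>T * P = four_block_mat (1\<^sub>m 1 * 1\<^sub>m 1 + 0\<^sub>m 1 n * 0\<^sub>m n 1)
       (1\<^sub>m 1 * 0\<^sub>m 1 n + 0\<^sub>m 1 n * U') (0\<^sub>m n 1 * 1\<^sub>m 1 + U'\<^sup>T * 0\<^sub>m n 1)
       (0\<^sub>m n 1 * 0\<^sub>m 1 n + U'\<^sup>T * U')"
    unfolding PT by (unfold P_def, rule mult_four_block_mat) (use U' in auto)
  also have "\<dots> = four_block_mat (1\<^sub>m 1) (0\<^sub>m 1 n) (0\<^sub>m n 1) (1\<^sub>m n)"
    unfolding UU' using U' by (intro cong_four_block_mat) auto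
  finally have PP: "P\<^sup>T * P = 1\<^sub>m ?n" by simp
  have "U\<^sup>T * U = P\<^sup>T * H * (H * P)" unfolding UT by (simp add: U_def)
  also have "\<dots> = P\<^sup>T * (H * H) * P" using H P by (simp add: assoc_mult_mat[of _ ?n ?n _ ?n _ ?n])
  finally have UU: "U\<^sup>T * U = 1\<^sub>m ?n" unfolding HH using P PP by simp
  have "U\<^sup>T * A * U = P\<^sup>T * H * A * (H * P)" unfolding UT by (simp add: U_def)
  also have "\<dots> = P\<^sup>T * (H * A * H) * P" using H P A
    by (simp add: assoc_mult_mat[of _ ?n ?n _ ?n _ ?n])
  also have "\<dots> = four_block_mat (1\<^sub>m 1 * E + 0\<^sub>m 1 n * 0\<^sub>m n 1)
       (1\<^sub>m 1 * 0\<^sub>m 1 n + 0\<^sub>m 1 n * A') (0\<^sub>m n 1 * E + U'\<^sup>T * 0\<^sub>m n 1)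
       (0\<^sub>m n 1 * 0\<^sub>m 1 n + U'\<^sup>T * A') * P"
    unfolding PT HAH E_def[symmetric] by (subst mult_four_block_mat) (use U' A' E in auto)
  also have "\<dots> = four_block_mat E (0\<^sub>m 1 n) (0\<^sub>m n 1) (U'\<^sup>T * A') * P"
    using U' A' E by (intro arg_cong2[where f="(*)"] cong_four_block_mat refl) auto
  also have "\<dots> = four_block_mat (E * 1\<^sub>m 1 + 0\<^sub>m 1 n * 0\<^sub>m n 1)
       (E * 0\<^sub>m 1 n + 0\<^sub>m 1 n * U') (0\<^sub>m n 1 * 1\<^sub>m 1 + (U'\<^sup>T * A') * 0\<^sub>m n 1)
       (0\<^sub>m n 1 * 0\<^sub>m 1 n + (U'\<^sup>T * A') * U')"
    unfolding P_def by (rule mult_four_block_mat) (use U' A' E in auto)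
  also have "\<dots> = four_block_mat E (0\<^sub>m 1 n) (0\<^sub>m n 1) D'" unfolding UAU'[symmetric]
    using U' A' E by (intro cong_four_block_mat) auto
  finally have UAU: "U\<^sup>T * A * U = four_block_mat E (0\<^sub>m 1 n) (0\<^sub>m n 1) D'" .
  have "diagonal_mat (four_block_mat E (0\<^sub>m 1 n) (0\<^sub>m n 1) D')"
    using dD' D' E unfolding diagonal_mat_def by auto
  moreover have "U \<in> carrier_mat ?n ?n" unfolding U_def using H P by auto
  moreover have "four_block_mat E (0\<^sub>m 1 n) (0\<^sub>m n 1) D' \<in> carrier_mat ?n ?n" using E D' by auto
  ultimately show ?case using UU UAU by blast
qed

lemma symmetric_real_mat_spectral_decomposition:
  fixes A :: "real mat"
  assumes A: "A \<in> carrier_mat n n" and sym: "A\<^sup>T = A"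
  obtains U e where
    "\<And>i j. i < n \<Longrightarrow> j < n \<Longrightarrow> (\<Sum>k<n. U i k * U j k) = (if i = j then 1 else 0)"
    "\<And>i j. i < n \<Longrightarrow> j < n \<Longrightarrow> (\<Sum>k<n. U k i * U k j) = (if i = j then 1 else 0)"
    "\<And>i j. i < n \<Longrightarrow> j < n \<Longrightarrow> A $$ (i,j) = (\<Sum>k<n. U i k * e k * U j k)"
    "char_poly A = (\<Prod>k\<leftarrow>[0..<n]. [:- e k, 1:])"
proof -
  obtain U D where U: "U \<in> carrier_mat n n" and D: "D \<in> carrier_mat n n" and UU: "U\<^sup>T * U = 1\<^sub>m n"
    and dD: "diagonal_mat D" and UAU: "U\<^sup>T * A * U = D"
    using symmetric_real_mat_orthogonally_diagonalizable[OF A sym] by blast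
  have UUT: "U * U\<^sup>T = 1\<^sub>m n" using mat_mult_left_right_inverse[OF _ U UU] U by simp
  have AD: "A = U * D * U\<^sup>T"
  proof -
    have "U * D * U\<^sup>T = (U * U\<^sup>T) * A * (U * U\<^sup>T)" unfolding UAU[symmetric] using U A
      by (simp add: assoc_mult_mat[of _ n n _ n _ n])
    thus ?thesis unfolding UUT using A by simp
  qed
  define e where "e = (\<lambda>k. D $$ (k,k))"
  define V where "V = (\<lambda>i k. U $$ (i,k))"
  have "(\<Sum>k<n. V i k * V j k) = (if i = j then 1 else 0)" if "i < n" "j < n" for i j
  proof -
    have "(U * U\<^sup>T) $$ (i,j) = (\<Sum>k<n. V i k * V j k)"
      using U that by (simp add: V_def scalar_prod_def atLeast0LessThan)
    thus ?thesis unfolding UUT using that by simp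
  qed
  moreover have "(\<Sum>k<n. V k i * V k j) = (if i = j then 1 else 0)" if "i < n" "j < n" for i j
  proof -
    have "(U\<^sup>T * U) $$ (i,j) = (\<Sum>k<n. V k i * V k j)"
      using U that by (simp add: V_def scalar_prod_def atLeast0LessThan)
    thus ?thesis unfolding UU using that by simp
  qed
  moreover have "A $$ (i,j) = (\<Sum>k<n. V i k * e k * V j k)" if i: "i < n" and j: "j < n" for i j
  proof -
    have "A $$ (i,j) = (\<Sum>k<n. U $$ (i,k) * (\<Sum>l<n. D $$ (k,l) * U $$ (j,l)))"
      using U D i j by (subst AD) (simp add: scalar_prod_def atLeast0LessThan)
    also have "\<dots> = (\<Sum>k<n. U $$ (i,k) * (\<Sum>l<n. if l = k then D $$ (k,l) * U $$ (j,l) else 0))"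
      using dD D unfolding diagonal_mat_def by (intro sum.cong refl arg_cong2[where f="(*)"]) auto
    also have "\<dots> = (\<Sum>k<n. V i k * e k * V j k)" by (simp add: V_def e_def mult.assoc)
    finally show ?thesis .
  qed
  moreover have "char_poly A = (\<Prod>k\<leftarrow>[0..<n]. [:- e k, 1:])"
  proof -
    have "similar_mat A D" unfolding similar_mat_def similar_mat_wit_def
      by (rule exI[of _ U], rule exI[of _ "U\<^sup>T"]) (use A D U UU UUT AD in auto)
    hence "char_poly A = char_poly D" by (rule char_poly_similar)
    also have "\<dots> = (\<Prod>a\<leftarrow>diag_mat D. [:- a, 1:])"
      using dD D by (intro char_poly_upper_triangular) (auto simp: diagonal_mat_def upper_triangular_def)
    also have "diag_mat D = map e [0..<n]" unfolding diag_mat_def e_def using D by simp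
    finally show ?thesis by (simp add: comp_def)
  qed
  ultimately show ?thesis using that by blast
qed

lemma prod_list_map_eq_if_mset_eq:
  fixes f :: "'a \<Rightarrow> 'b::comm_monoid_mult"
  assumes "mset xs = mset ys"
  shows "prod_list (map f xs) = prod_list (map f ys)"
proof -
  have "prod_list (map f xs) = prod_mset (mset (map f xs))" by (rule prod_mset_prod_list[symmetric])
  also have "\<dots> = prod_mset (mset (map f ys))" using assms by simp
  also have "\<dots> = prod_list (map f ys)" by (rule prod_mset_prod_list)
  finally show ?thesis .
qed

lemma mset_eq_if_linear_factors_eq:
  fixes xs ys :: "real list"
  assumes "(\<Prod>x\<leftarrow>xs. [:- x, 1:]) = (\<Prod>y\<leftarrow>ys. [:- y, 1:])"
  shows "mset xs = mset ys"
  using assms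
proof (induction xs arbitrary: ys)
  case Nil
  have d: "degree (\<Prod>y\<leftarrow>ys. [:- y, 1:]) = length ys" by (rule degree_linear_factors)
  have "(\<Prod>y\<leftarrow>ys. [:- y, 1:]) = 1" using Nil.prems[symmetric] by (simp only: list.map prod_list.Nil)
  hence "length ys = 0" using d by simp
  thus ?case by simp
next
  case (Cons x xs)
  have eq: "[:- x, 1:] * (\<Prod>y\<leftarrow>xs. [:- y, 1:]) = (\<Prod>y\<leftarrow>ys. [:- y, 1:])"
    using Cons.prems by (simp only: list.map prod_list.Cons)
  have "poly (\<Prod>y\<leftarrow>ys. [:- y, 1:]) x = 0" unfolding eq[symmetric] by (simp only: poly_mult) simp
  hence "0 \<in> set (map (\<lambda>p. poly p x) (map (\<lambda>y. [:- y, 1:]) ys))"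
    by (simp only: poly_prod_list prod_list_zero_iff)
  hence "x \<in> set ys" by auto
  hence ms: "mset ys = mset (x # remove1 x ys)" by simp
  have "(\<Prod>y\<leftarrow>ys. [:- y, 1:]) = (\<Prod>y\<leftarrow>x # remove1 x ys. [:- y, 1:])"
    using ms by (rule prod_list_map_eq_if_mset_eq)
  hence "[:- x, 1:] * (\<Prod>y\<leftarrow>xs. [:- y, 1:]) = [:- x, 1:] * (\<Prod>y\<leftarrow>remove1 x ys. [:- y, 1:])"
    unfolding eq by (simp only: list.map prod_list.Cons)
  moreover have nz: "[:- x, 1:] \<noteq> (0::real poly)" by simp
  ultimately have "(\<Prod>y\<leftarrow>xs. [:- y, 1:]) = (\<Prod>y\<leftarrow>remove1 x ys. [:- y, 1:])"
    using mult_left_cancel[OF nz] by blast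
  from Cons.IH[OF this] have ih: "mset xs = mset (remove1 x ys)" .
  have "mset (x # xs) = mset (x # remove1 x ys)" by (simp only: mset.simps ih)
  also have "\<dots> = mset ys" by (rule ms[symmetric])
  finally show ?case .
qed

lemma sorted_roots_eq_sort:
  fixes e :: "nat \<Rightarrow> real"
  assumes "p = (\<Prod>k\<leftarrow>[0..<n]. [:- e k, 1:])"
  shows "(THE xs. sorted xs \<and> p = (\<Prod>x\<leftarrow>xs. [:- x, 1:])) = sort (map e [0..<n])"
proof (rule the_equality)
  have "(\<Prod>x\<leftarrow>sort (map e [0..<n]). [:- x, 1:]) = (\<Prod>x\<leftarrow>map e [0..<n]. [:- x, 1:])"
    by (rule prod_list_map_eq_if_mset_eq) simp
  thus "sorted (sort (map e [0..<n])) \<and> p = (\<Prod>x\<leftarrow>sort (map e [0..<n]). [:- x, 1:])"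
    using assms by (simp add: comp_def)
next
  fix xs assume xs: "sorted xs \<and> p = (\<Prod>x\<leftarrow>xs. [:- x, 1:])"
  hence "mset xs = mset (map e [0..<n])"
    using assms by (intro mset_eq_if_linear_factors_eq) (simp add: comp_def)
  thus "xs = sort (map e [0..<n])" using xs properties_for_sort[of xs "map e [0..<n]"] by simp
qed

lemma card_nth_sort_map_upt:
  "card {i. i < length (sort (map e [0..<n])) \<and> P (sort (map e [0..<n]) ! i)} = card {k. k < n \<and> P (e k)}"
proof -
  have "card {i. i < length (sort (map e [0..<n])) \<and> P (sort (map e [0..<n]) ! i)}
      = length (filter P (sort (map e [0..<n])))" by (simp add: length_filter_conv_card)
  also have "\<dots> = length (filter P (map e [0..<n]))"
    by (metis mset_filter mset_sort size_mset)
  also have "\<dots> = card {k. k < n \<and> P (e k)}" unfolding length_filter_conv_card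
    by (intro arg_cong[where f=card]) auto
  finally show ?thesis .
qed

lemma sorted_nth_le_if_card_le:
  fixes xs :: "real list"
  assumes s: "sorted xs" and m: "1 \<le> m" and c: "m \<le> card {i. i < length xs \<and> xs ! i \<le> c}"
  shows "xs ! (m - 1) \<le> c"
proof (rule ccontr)
  assume "\<not> ?thesis"
  hence "i \<in> {..<m - 1}" if "i < length xs" "xs ! i \<le> c" for i
    using that sorted_nth_mono[OF s, of "m - 1" i] by (cases "m - 1 \<le> i") auto
  hence "{i. i < length xs \<and> xs ! i \<le> c} \<subseteq> {..<m - 1}" by blast
  hence "card {i. i < length xs \<and> xs ! i \<le> c} \<le> m - 1"
    by (metis card_lessThan card_mono finite_lessThan)
  thus False using c m by simp
qed

lemma sorted_nth_ge_if_card_ge: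
  fixes xs :: "real list"
  assumes s: "sorted xs" and m: "1 \<le> m" and c: "m \<le> card {i. i < length xs \<and> c \<le> xs ! i}"
  shows "c \<le> xs ! (length xs - m)"
proof (rule ccontr)
  assume "\<not> ?thesis"
  hence lt: "xs ! (length xs - m) < c" by simp
  have "i \<in> {length xs - m + 1..<length xs}" if i: "i < length xs" "c \<le> xs ! i" for i
  proof (rule ccontr)
    assume "i \<notin> {length xs - m + 1..<length xs}"
    hence "xs ! i \<le> xs ! (length xs - m)" using s i m by (intro sorted_nth_mono) auto
    thus False using i lt by simp
  qed
  hence "card {i. i < length xs \<and> c \<le> xs ! i} \<le> card {length xs - m + 1..<length xs}"
    by (intro card_mono) auto
  thus False using c m by simp
qed

lemma homogeneous_system_nontrivial_solution:
  fixes C :: "'i \<Rightarrow> 'j \<Rightarrow> real"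
  assumes "finite I" "finite J" "card I < card J"
  shows "\<exists>a. (\<exists>j\<in>J. a j \<noteq> 0) \<and> (\<forall>i\<in>I. (\<Sum>j\<in>J. C i j * a j) = 0)"
  using assms
proof (induction I arbitrary: J C rule: finite_induct)
  case empty
  then obtain j where "j \<in> J" by (metis card.empty card_gt_0_iff ex_in_conv)
  thus ?case by (intro exI[of _ "\<lambda>_. 1"]) auto
next
  case (insert i0 I)
  show ?case
  proof (cases "\<forall>j\<in>J. C i0 j = 0")
    case True
    have "card I < card J" using insert by simp
    then obtain a where "\<exists>j\<in>J. a j \<noteq> 0" "\<forall>i\<in>I. (\<Sum>j\<in>J. C i j * a j) = 0"
      using insert.IH[OF insert.prems(1)] by blast
    thus ?thesis using True by (intro exI[of _ a]) auto
  next
    case False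
    then obtain j0 where j0: "j0 \<in> J" and c0: "C i0 j0 \<noteq> 0" by blast
    text \<open>Eliminate the unknown \<open>a j0\<close> using equation \<open>i0\<close>.\<close>
    define J' where "J' = J - {j0}"
    define C' where "C' = (\<lambda>i j. C i j - C i j0 * C i0 j / C i0 j0)"
    have "card I < card J'" unfolding J'_def using insert j0 by (simp add: card_Diff_singleton)
    then obtain a' where a'1: "\<exists>j\<in>J'. a' j \<noteq> 0" and a'2: "\<forall>i\<in>I. (\<Sum>j\<in>J'. C' i j * a' j) = 0"
      using insert.IH[of J' C'] insert.prems unfolding J'_def by blast
    define a where "a = (\<lambda>j. if j = j0 then - (\<Sum>j\<in>J'. C i0 j * a' j) / C i0 j0 else a' j)"
    have Jsplit: "\<And>f. (\<Sum>j\<in>J. f j) = f j0 + (\<Sum>j\<in>J'. f j)"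
      unfolding J'_def using insert j0 by (simp add: sum.remove)
    have aJ': "\<And>f. (\<Sum>j\<in>J'. f j * a j) = (\<Sum>j\<in>J'. f j * a' j)"
      unfolding a_def J'_def by (intro sum.cong) auto
    obtain j where "j \<in> J'" "a' j \<noteq> 0" using a'1 by blast
    hence "\<exists>j\<in>J. a j \<noteq> 0" unfolding J'_def by (intro bexI[of _ j]) (auto simp: a_def)
    moreover have "(\<Sum>j\<in>J. C i0 j * a j) = 0"
      unfolding Jsplit aJ' using c0 by (simp add: a_def)
    moreover have "(\<Sum>j\<in>J. C i j * a j) = 0" if i: "i \<in> I" for i
    proof -
      have "(\<Sum>j\<in>J. C i j * a j) = (\<Sum>j\<in>J'. C' i j * a' j)"
        unfolding Jsplit aJ' using c0
        by (simp add: a_def C'_def sum_distrib_left sum_subtractf sum_divide_distrib algebra_simps)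
      thus ?thesis using a'2 i by simp
    qed
    ultimately show ?thesis by blast
  qed
qed

lemma quadratic_form_in_coordinates:
  fixes U :: "nat \<Rightarrow> nat \<Rightarrow> real"
  shows "(\<Sum>k<n. e k * (\<Sum>i<n. U i k * z i)\<^sup>2)
    = (\<Sum>i<n. \<Sum>l<n. z i * (\<Sum>k<n. U i k * e k * U l k) * z l)"
proof -
  have "(\<Sum>k<n. e k * (\<Sum>i<n. U i k * z i)\<^sup>2)
      = (\<Sum>k<n. (\<Sum>i<n. U i k * e k * z i) * (\<Sum>l<n. U l k * z l))"
    by (simp add: power2_eq_square sum_distrib_left mult_ac)
  also have "\<dots> = (\<Sum>k<n. \<Sum>i<n. \<Sum>l<n. (U i k * e k * z i) * (U l k * z l))"
    by (simp add: sum_product)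
  also have "\<dots> = (\<Sum>i<n. \<Sum>k<n. \<Sum>l<n. (U i k * e k * z i) * (U l k * z l))" by (rule sum.swap)
  also have "\<dots> = (\<Sum>i<n. \<Sum>l<n. \<Sum>k<n. (U i k * e k * z i) * (U l k * z l))"
    by (intro sum.cong refl sum.swap)
  also have "\<dots> = (\<Sum>i<n. \<Sum>l<n. z i * (\<Sum>k<n. U i k * e k * U l k) * z l)"
    by (simp add: sum_distrib_left sum_distrib_right mult_ac)
  finally show ?thesis .
qed

lemma orthogonal_coordinates_norm:
  fixes U :: "nat \<Rightarrow> nat \<Rightarrow> real"
  assumes rows: "\<And>i j. i < n \<Longrightarrow> j < n \<Longrightarrow> (\<Sum>k<n. U i k * U j k) = (if i = j then 1 else 0)"
  shows "(\<Sum>k<n. (\<Sum>i<n. U i k * z i)\<^sup>2) = (\<Sum>i<n. (z i)\<^sup>2)"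
proof -
  have "(\<Sum>k<n. (\<Sum>i<n. U i k * z i)\<^sup>2) = (\<Sum>i<n. \<Sum>l<n. z i * (\<Sum>k<n. U i k * 1 * U l k) * z l)"
    using quadratic_form_in_coordinates[where e="\<lambda>_. 1" and z=z and U=U] by simp
  also have "\<dots> = (\<Sum>i<n. \<Sum>l<n. if i = l then z i * z l else 0)"
    by (intro sum.cong refl) (simp add: rows)
  finally show ?thesis by (simp add: power2_eq_square)
qed

text \<open>The counting half of the Courant--Fischer min-max principle, for \<open>M = U diag(e) U\<^sup>T\<close>
  with \<open>U\<close> orthogonal, in coordinates.\<close>
theorem courant_fischer_count:
  fixes U M :: "nat \<Rightarrow> nat \<Rightarrow> real" and e :: "nat \<Rightarrow> real" and y :: "nat \<Rightarrow> nat \<Rightarrow> real"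
  assumes rows: "\<And>i j. i < n \<Longrightarrow> j < n \<Longrightarrow> (\<Sum>k<n. U i k * U j k) = (if i = j then 1 else 0)"
    and M: "\<And>i j. i < n \<Longrightarrow> j < n \<Longrightarrow> M i j = (\<Sum>k<n. U i k * e k * U j k)"
    and indep: "\<And>a. (\<forall>i<n. (\<Sum>j<m. a j * y j i) = 0) \<Longrightarrow> (\<forall>j<m. a j = 0)"
    and ray: "\<And>a. (\<Sum>i<n. \<Sum>l<n. (\<Sum>j<m. a j * y j i) * M i l * (\<Sum>j<m. a j * y j l))
                  \<le> c * (\<Sum>i<n. (\<Sum>j<m. a j * y j i)\<^sup>2)"
  shows "m \<le> card {k. k < n \<and> e k \<le> c}"
proof (rule ccontr)
  define K where "K = {k. k < n \<and> e k \<le> c}"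
  assume "\<not> ?thesis"
  hence "card K < card {..<m}" unfolding K_def by simp
  then obtain a where a_nonzero: "\<exists>j<m. a j \<noteq> 0"
    and a_perp: "\<forall>k\<in>K. (\<Sum>j<m. (\<Sum>i<n. U i k * y j i) * a j) = 0"
    using homogeneous_system_nontrivial_solution[of K "{..<m}" "\<lambda>k j. \<Sum>i<n. U i k * y j i"]
    unfolding K_def by auto
  define z where "z = (\<lambda>i. \<Sum>j<m. a j * y j i)"
  define w where "w = (\<lambda>k. \<Sum>i<n. U i k * z i)"
  have wK: "w k = 0" if "k \<in> K" for k
  proof -
    have "w k = (\<Sum>i<n. \<Sum>j<m. U i k * y j i * a j)"
      unfolding w_def z_def by (simp add: sum_distrib_left mult_ac)
    also have "\<dots> = (\<Sum>j<m. \<Sum>i<n. U i k * y j i * a j)" by (rule sum.swap)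
    also have "\<dots> = (\<Sum>j<m. (\<Sum>i<n. U i k * y j i) * a j)" by (simp add: sum_distrib_right)
    finally show ?thesis using a_perp that by simp
  qed
  have norm: "(\<Sum>k<n. (w k)\<^sup>2) = (\<Sum>i<n. (z i)\<^sup>2)"
    unfolding w_def by (rule orthogonal_coordinates_norm[OF rows])
  have "(\<Sum>i<n. \<Sum>l<n. z i * M i l * z l) = (\<Sum>i<n. \<Sum>l<n. z i * (\<Sum>k<n. U i k * e k * U l k) * z l)"
    by (intro sum.cong refl) (simp add: M)
  also have "\<dots> = (\<Sum>k<n. e k * (w k)\<^sup>2)"
    unfolding w_def by (rule quadratic_form_in_coordinates[symmetric])
  finally have form: "(\<Sum>k<n. e k * (w k)\<^sup>2) = (\<Sum>i<n. \<Sum>l<n. z i * M i l * z l)" ..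
  obtain i where "i < n" "z i \<noteq> 0" using indep[of a] a_nonzero unfolding z_def by blast
  hence "(\<Sum>k<n. (w k)\<^sup>2) \<noteq> 0" unfolding norm by (subst sum_nonneg_eq_0_iff) auto
  hence "\<exists>k<n. w k \<noteq> 0" by (auto intro: sum.neutral)
  then obtain k0 where k0: "k0 < n" "w k0 \<noteq> 0" by blast
  have "k0 \<notin> K" using wK k0 by blast
  have "0 < (\<Sum>k<n. (e k - c) * (w k)\<^sup>2)"
  proof (rule sum_pos2[of _ k0])
    show "0 < (e k0 - c) * (w k0)\<^sup>2" using \<open>k0 \<notin> K\<close> k0 unfolding K_def by simp
    show "0 \<le> (e k - c) * (w k)\<^sup>2" if "k \<in> {..<n}" for k
      using wK[of k] that unfolding K_def by (cases "e k \<le> c") auto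
  qed (use k0 in auto)
  also have "(\<Sum>k<n. (e k - c) * (w k)\<^sup>2) = (\<Sum>k<n. e k * (w k)\<^sup>2) - c * (\<Sum>k<n. (w k)\<^sup>2)"
    by (simp add: left_diff_distrib sum_subtractf sum_distrib_left)
  finally have "c * (\<Sum>i<n. (z i)\<^sup>2) < (\<Sum>i<n. \<Sum>l<n. z i * M i l * z l)"
    unfolding norm form by simp
  moreover have "(\<Sum>i<n. \<Sum>l<n. z i * M i l * z l) \<le> c * (\<Sum>i<n. (z i)\<^sup>2)"
    using ray[of a] unfolding z_def .
  ultimately show False by simp
qed

section \<open>The graph Laplacian\<close>

definition undirected_graph :: "'v set \<Rightarrow> ('v \<Rightarrow> 'v \<Rightarrow> bool) \<Rightarrow> bool" where
  "undirected_graph W A \<longleftrightarrow> finite W \<and> (\<forall>x y. A x y \<longrightarrow> A y x) \<and> (\<forall>x. \<not> A x x)"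

definition vdeg :: "'v set \<Rightarrow> ('v \<Rightarrow> 'v \<Rightarrow> bool) \<Rightarrow> 'v \<Rightarrow> nat" where
  "vdeg W A x = card {z \<in> W. A x z}"

definition lap_form :: "'v set \<Rightarrow> ('v \<Rightarrow> 'v \<Rightarrow> bool) \<Rightarrow> ('v \<Rightarrow> real) \<Rightarrow> real" where
  "lap_form W A f =
     (\<Sum>x\<in>W. \<Sum>y\<in>W. f x * (if x = y then real (vdeg W A x) else if A x y then -1 else 0) * f y)"

text \<open>Each edge is counted twice, once in each direction.\<close>
definition dirichlet_sum :: "'v set \<Rightarrow> ('v \<Rightarrow> 'v \<Rightarrow> bool) \<Rightarrow> ('v \<Rightarrow> real) \<Rightarrow> real" where
  "dirichlet_sum W A f = (\<Sum>x\<in>W. \<Sum>y\<in>W. if A x y then (f x - f y)\<^sup>2 else 0)"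

lemma sum_adjacent_eq_vdeg:
  assumes "finite W"
  shows "(\<Sum>x\<in>W. \<Sum>y\<in>W. if A x y then g x else 0) = (\<Sum>x\<in>W. real (vdeg W A x) * (g x :: real))"
proof (intro sum.cong refl)
  fix x
  have "{z \<in> W. A x z} = W \<inter> Collect (A x)" by blast
  thus "(\<Sum>y\<in>W. if A x y then g x else 0) = real (vdeg W A x) * g x"
    unfolding vdeg_def using assms by (simp add: sum.If_cases)
qed

lemma sum_adjacent_swap:
  assumes "undirected_graph W A"
  shows "(\<Sum>x\<in>W. \<Sum>y\<in>W. if A x y then g y else 0) = (\<Sum>x\<in>W. \<Sum>y\<in>W. if A x y then (g x :: real) else 0)"
proof -
  have "(\<Sum>x\<in>W. \<Sum>y\<in>W. if A x y then g y else 0) = (\<Sum>y\<in>W. \<Sum>x\<in>W. if A x y then g y else 0)"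
    by (rule sum.swap)
  also have "\<dots> = (\<Sum>x\<in>W. \<Sum>y\<in>W. if A x y then g x else 0)"
  proof (intro sum.cong refl)
    fix x y
    have "A y x = A x y" using assms unfolding undirected_graph_def by blast
    thus "(if A y x then g x else 0) = (if A x y then g x else 0)" by simp
  qed
  finally show ?thesis .
qed

lemma lap_form_eq:
  assumes "undirected_graph W A"
  shows "lap_form W A f
    = (\<Sum>x\<in>W. real (vdeg W A x) * (f x)\<^sup>2) - (\<Sum>x\<in>W. \<Sum>y\<in>W. if A x y then f x * f y else 0)"
proof -
  have fin: "finite W" and irr: "\<And>x. \<not> A x x" using assms unfolding undirected_graph_def by auto
  have "lap_form W A f = (\<Sum>x\<in>W. \<Sum>y\<in>W. (if x = y then real (vdeg W A x) * (f x)\<^sup>2 else 0)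
        - (if A x y then f x * f y else 0))"
    unfolding lap_form_def by (intro sum.cong refl) (auto simp: irr power2_eq_square)
  thus ?thesis using fin by (simp add: sum_subtractf)
qed

lemma dirichlet_sum_eq_twice_lap_form:
  assumes "undirected_graph W A"
  shows "dirichlet_sum W A f = 2 * lap_form W A f"
proof -
  have fin: "finite W" using assms unfolding undirected_graph_def by auto
  have "dirichlet_sum W A f = (\<Sum>x\<in>W. \<Sum>y\<in>W. (if A x y then (f x)\<^sup>2 else 0)
       + (if A x y then (f y)\<^sup>2 else 0) - 2 * (if A x y then f x * f y else 0))"
    unfolding dirichlet_sum_def by (intro sum.cong refl) (auto simp: power2_eq_square algebra_simps)
  also have "\<dots> = (\<Sum>x\<in>W. \<Sum>y\<in>W. if A x y then (f x)\<^sup>2 else 0)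
       + (\<Sum>x\<in>W. \<Sum>y\<in>W. if A x y then (f y)\<^sup>2 else 0)
       - 2 * (\<Sum>x\<in>W. \<Sum>y\<in>W. if A x y then f x * f y else 0)"
    by (simp add: sum.distrib sum_subtractf sum_distrib_left)
  finally show ?thesis
    unfolding sum_adjacent_swap[OF assms] lap_form_eq[OF assms] sum_adjacent_eq_vdeg[OF fin] by simp
qed

lemma lap_form_nonneg:
  assumes "undirected_graph W A"
  shows "0 \<le> lap_form W A f"
proof -
  have "0 \<le> dirichlet_sum W A f" unfolding dirichlet_sum_def by (intro sum_nonneg) auto
  thus ?thesis using dirichlet_sum_eq_twice_lap_form[OF assms] by simp
qed

lemma lap_form_le:
  assumes g: "undirected_graph W A" and D: "\<And>x. x \<in> W \<Longrightarrow> vdeg W A x \<le> D"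
  shows "lap_form W A f \<le> 2 * real D * (\<Sum>x\<in>W. (f x)\<^sup>2)"
proof -
  have fin: "finite W" using g unfolding undirected_graph_def by auto
  have "dirichlet_sum W A f \<le> (\<Sum>x\<in>W. \<Sum>y\<in>W. (if A x y then 2 * (f x)\<^sup>2 else 0) + (if A x y then 2 * (f y)\<^sup>2 else 0))"
    unfolding dirichlet_sum_def
  proof (intro sum_mono)
    fix x y
    have "(f x - f y)\<^sup>2 \<le> 2 * (f x)\<^sup>2 + 2 * (f y)\<^sup>2"
      by (smt (verit) power2_diff power2_sum zero_le_power2)
    thus "(if A x y then (f x - f y)\<^sup>2 else 0)
      \<le> (if A x y then 2 * (f x)\<^sup>2 else 0) + (if A x y then 2 * (f y)\<^sup>2 else 0)" by simp
  qed
  also have "\<dots> = 2 * (\<Sum>x\<in>W. \<Sum>y\<in>W. if A x y then (f x)\<^sup>2 else 0)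
      + 2 * (\<Sum>x\<in>W. \<Sum>y\<in>W. if A x y then (f y)\<^sup>2 else 0)"
    by (simp add: sum.distrib sum_distrib_left if_distrib[of "\<lambda>t. 2 * t"] cong: if_cong)
  also have "\<dots> = 4 * (\<Sum>x\<in>W. real (vdeg W A x) * (f x)\<^sup>2)"
    unfolding sum_adjacent_swap[OF g] sum_adjacent_eq_vdeg[OF fin] by simp
  also have "\<dots> \<le> 4 * (\<Sum>x\<in>W. real D * (f x)\<^sup>2)"
    using D by (intro mult_left_mono sum_mono mult_right_mono) auto
  also have "\<dots> = 2 * (2 * real D * (\<Sum>x\<in>W. (f x)\<^sup>2))" by (simp add: sum_distrib_left)
  finally show ?thesis using dirichlet_sum_eq_twice_lap_form[OF g] by simp
qed

lemma sum_sorted_list_of_set_nth: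
  assumes "finite W"
  shows "(\<Sum>i<card W. h (sorted_list_of_set W ! i)) = (\<Sum>x\<in>W. h x)"
proof -
  have "bij_betw ((!) (sorted_list_of_set W)) {..<card W} W"
    by (rule bij_betw_nth) (use assms in auto)
  thus ?thesis using sum.reindex_bij_betw[of _ "{..<card W}" W h] by simp
qed

lemma laplacian_mat_carrier: "laplacian_mat W A \<in> carrier_mat (card W) (card W)"
  unfolding laplacian_mat_def Let_def by simp

lemma laplacian_mat_index:
  assumes "finite W" and "i < card W" and "l < card W"
  shows "laplacian_mat W A $$ (i,l) =
    (let x = sorted_list_of_set W ! i; y = sorted_list_of_set W ! l in
     if x = y then real (vdeg W A x) else if A x y then -1 else 0)"
proof -
  have "distinct (sorted_list_of_set W)" "length (sorted_list_of_set W) = card W" by simp_all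
  hence "(sorted_list_of_set W ! i = sorted_list_of_set W ! l) = (i = l)"
    using assms by (simp add: nth_eq_iff_index_eq)
  thus ?thesis unfolding laplacian_mat_def Let_def vdeg_def using assms by auto
qed

lemma laplacian_mat_symmetric:
  assumes g: "undirected_graph W A"
  shows "(laplacian_mat W A)\<^sup>T = laplacian_mat W A"
proof (rule eq_matI)
  fix i j assume "i < dim_row (laplacian_mat W A)" "j < dim_col (laplacian_mat W A)"
  thus "(laplacian_mat W A)\<^sup>T $$ (i,j) = laplacian_mat W A $$ (i,j)"
    using g laplacian_mat_carrier[of W A] laplacian_mat_index[of W _ _ A]
    by (auto simp: Let_def undirected_graph_def)
qed (use laplacian_mat_carrier[of W A] in auto)

lemma laplacian_mat_quadratic_form:
  assumes fin: "finite W"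
  shows "(\<Sum>i<card W. \<Sum>l<card W. f (sorted_list_of_set W ! i) * laplacian_mat W A $$ (i,l)
            * f (sorted_list_of_set W ! l)) = lap_form W A f"
  unfolding lap_form_def sum_sorted_list_of_set_nth[OF fin, symmetric]
  by (intro sum.cong refl) (simp add: laplacian_mat_index[OF fin] Let_def)

lemma laplacian_spectral_decomposition:
  assumes g: "undirected_graph W A"
  obtains U e where
    "\<And>i j. i < card W \<Longrightarrow> j < card W \<Longrightarrow> (\<Sum>k<card W. U i k * U j k) = (if i = j then 1 else 0)"
    "\<And>i j. i < card W \<Longrightarrow> j < card W \<Longrightarrow> (\<Sum>k<card W. U k i * U k j) = (if i = j then 1 else 0)"
    "\<And>i j. i < card W \<Longrightarrow> j < card W \<Longrightarrow> laplacian_mat W A $$ (i,j) = (\<Sum>k<card W. U i k * e k * U j k)"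
    "lap_eigs W A = sort (map e [0..<card W])"
proof -
  obtain U e where "\<And>i j. i < card W \<Longrightarrow> j < card W \<Longrightarrow> (\<Sum>k<card W. U i k * U j k) = (if i = j then 1 else 0)"
    "\<And>i j. i < card W \<Longrightarrow> j < card W \<Longrightarrow> (\<Sum>k<card W. U k i * U k j) = (if i = j then 1 else 0)"
    "\<And>i j. i < card W \<Longrightarrow> j < card W \<Longrightarrow> laplacian_mat W A $$ (i,j) = (\<Sum>k<card W. U i k * e k * U j k)"
    and cp: "char_poly (laplacian_mat W A) = (\<Prod>k\<leftarrow>[0..<card W]. [:- e k, 1:])"
    using symmetric_real_mat_spectral_decomposition[OF laplacian_mat_carrier laplacian_mat_symmetric[OF g]] by blast
  moreover have "lap_eigs W A = sort (map e [0..<card W])"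
    unfolding lap_eigs_def by (rule sorted_roots_eq_sort[OF cp])
  ultimately show ?thesis using that by blast
qed

text \<open>The eigenvalue \<open>e k\<close> is the value of the Laplacian form at the \<open>k\<close>-th unit eigenvector.\<close>
lemma lap_eigs_bounds:
  assumes g: "undirected_graph W A" and D: "\<And>x. x \<in> W \<Longrightarrow> vdeg W A x \<le> D"
    and i: "i < card W"
  shows "0 \<le> lap_eigs W A ! i" and "lap_eigs W A ! i \<le> 2 * real D"
proof -
  have fin: "finite W" using g unfolding undirected_graph_def by auto
  let ?vs = "sorted_list_of_set W"
  let ?N = "card W"
  obtain U e where rows: "\<And>i j. i < ?N \<Longrightarrow> j < ?N \<Longrightarrow> (\<Sum>k<?N. U i k * U j k) = (if i = j then 1 else 0)"
    and cols: "\<And>i j. i < ?N \<Longrightarrow> j < ?N \<Longrightarrow> (\<Sum>k<?N. U k i * U k j) = (if i = j then 1 else 0)"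
    and ent: "\<And>i j. i < ?N \<Longrightarrow> j < ?N \<Longrightarrow> laplacian_mat W A $$ (i,j) = (\<Sum>k<?N. U i k * e k * U j k)"
    and eigs: "lap_eigs W A = sort (map e [0..<?N])"
    using laplacian_spectral_decomposition[OF g] by blast
  have "0 \<le> e k \<and> e k \<le> 2 * real D" if k: "k < ?N" for k
  proof -
    define f where "f x = U (the_inv_into {..<?N} ((!) ?vs) x) k" for x
    have "inj_on ((!) ?vs) {..<?N}"
      using bij_betw_nth[of ?vs "{..<?N}" W] fin unfolding bij_betw_def by auto
    hence fi: "f (?vs ! i) = U i k" if "i < ?N" for i
      using that by (simp add: f_def the_inv_into_f_f)
    have "lap_form W A f = (\<Sum>i<?N. \<Sum>l<?N. U i k * (\<Sum>k'<?N. U i k' * e k' * U l k') * U l k)"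
      unfolding laplacian_mat_quadratic_form[OF fin, symmetric] by (intro sum.cong refl) (simp add: fi ent)
    also have "\<dots> = (\<Sum>k'<?N. e k' * (\<Sum>i<?N. U i k' * U i k)\<^sup>2)"
      by (rule quadratic_form_in_coordinates[symmetric])
    also have "\<dots> = (\<Sum>k'<?N. if k' = k then e k' else 0)"
      using cols k by (intro sum.cong refl) auto
    finally have "lap_form W A f = e k" using k by simp
    moreover have "(\<Sum>x\<in>W. (f x)\<^sup>2) = 1"
      using cols[OF k k] unfolding sum_sorted_list_of_set_nth[OF fin, symmetric]
      by (simp add: fi power2_eq_square)
    ultimately show ?thesis using lap_form_nonneg[OF g, of f] lap_form_le[OF g D, of f] by simp
  qed
  moreover have "lap_eigs W A ! i \<in> e ` {..<?N}"
    using i nth_mem[of i "lap_eigs W A"] unfolding eigs by auto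
  ultimately show "0 \<le> lap_eigs W A ! i" "lap_eigs W A ! i \<le> 2 * real D" by auto
qed

lemma lap_eigs_sorted_length:
  assumes "undirected_graph W A"
  shows "sorted (lap_eigs W A)" and "length (lap_eigs W A) = card W"
proof -
  obtain U e where "\<And>i j. i < card W \<Longrightarrow> j < card W \<Longrightarrow> (\<Sum>k<card W. U i k * U j k) = (if i = j then 1 else 0)"
    "\<And>i j. i < card W \<Longrightarrow> j < card W \<Longrightarrow> (\<Sum>k<card W. U k i * U k j) = (if i = j then 1 else 0)"
    "\<And>i j. i < card W \<Longrightarrow> j < card W \<Longrightarrow> laplacian_mat W A $$ (i,j) = (\<Sum>k<card W. U i k * e k * U j k)"
    and "lap_eigs W A = sort (map e [0..<card W])"
    using laplacian_spectral_decomposition[OF assms] by blast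
  thus "sorted (lap_eigs W A)" "length (lap_eigs W A) = card W" by simp_all
qed

lemma power2_sum_single_support:
  fixes h :: "nat \<Rightarrow> real"
  assumes "\<And>j j'. j < m \<Longrightarrow> j' < m \<Longrightarrow> h j \<noteq> 0 \<Longrightarrow> h j' \<noteq> 0 \<Longrightarrow> j = j'"
  shows "(\<Sum>j<m. h j)\<^sup>2 = (\<Sum>j<m. (h j)\<^sup>2)"
proof (cases "\<exists>j<m. h j \<noteq> 0")
  case True
  then obtain j0 where j0: "j0 < m" "h j0 \<noteq> 0" by blast
  hence "h j = 0" if "j \<in> {..<m} - {j0}" for j using assms that by blast
  hence "(\<Sum>j<m. h j) = h j0" "(\<Sum>j<m. (h j)\<^sup>2) = (h j0)\<^sup>2"
    using j0 by (simp_all add: sum.remove)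
  thus ?thesis by simp
qed simp

text \<open>On combinations of test functions with pairwise disjoint, non-adjacent supports, the
  Laplacian form and the squared norm are additive.\<close>
locale separated_test_functions =
  fixes W :: "'v::linorder set" and A :: "'v \<Rightarrow> 'v \<Rightarrow> bool" and m :: nat
    and g :: "nat \<Rightarrow> 'v \<Rightarrow> real"
  assumes graph: "undirected_graph W A"
    and m_pos: "1 \<le> m"
    and separated: "\<And>j j' x y. j < m \<Longrightarrow> j' < m \<Longrightarrow> j \<noteq> j' \<Longrightarrow> g j x \<noteq> 0 \<Longrightarrow> g j' y \<noteq> 0
      \<Longrightarrow> x \<noteq> y \<and> \<not> A x y"
    and support: "\<And>j x. j < m \<Longrightarrow> g j x \<noteq> 0 \<Longrightarrow> x \<in> W"
    and nonzero: "\<And>j. j < m \<Longrightarrow> \<exists>x. g j x \<noteq> 0"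
begin

lemma finite_W: "finite W"
  using graph unfolding undirected_graph_def by auto

lemma norm_combination:
  "(\<Sum>x\<in>W. (\<Sum>j<m. a j * g j x)\<^sup>2) = (\<Sum>j<m. (a j)\<^sup>2 * (\<Sum>x\<in>W. (g j x)\<^sup>2))"
proof -
  have "(\<Sum>j<m. a j * g j x)\<^sup>2 = (\<Sum>j<m. (a j)\<^sup>2 * (g j x)\<^sup>2)" for x
    using power2_sum_single_support[of m "\<lambda>j. a j * g j x"] separated
    by (fastforce simp: power_mult_distrib)
  hence "(\<Sum>x\<in>W. (\<Sum>j<m. a j * g j x)\<^sup>2) = (\<Sum>j<m. \<Sum>x\<in>W. (a j)\<^sup>2 * (g j x)\<^sup>2)"
    using sum.swap by simp
  thus ?thesis by (simp add: sum_distrib_left)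
qed

lemma lap_form_combination:
  "lap_form W A (\<lambda>x. \<Sum>j<m. a j * g j x) = (\<Sum>j<m. (a j)\<^sup>2 * lap_form W A (g j))"
proof -
  let ?G = "\<lambda>x. \<Sum>j<m. a j * g j x"
  have sym: "\<And>x y. A x y \<Longrightarrow> A y x" using graph unfolding undirected_graph_def by auto
  have edge: "(?G x - ?G y)\<^sup>2 = (\<Sum>j<m. (a j)\<^sup>2 * (g j x - g j y)\<^sup>2)" if "A x y" for x y
  proof -
    have "(?G x - ?G y)\<^sup>2 = (\<Sum>j<m. a j * (g j x - g j y))\<^sup>2"
      by (simp add: sum_subtractf algebra_simps)
    also have "\<dots> = (\<Sum>j<m. (a j * (g j x - g j y))\<^sup>2)"
    proof (rule power2_sum_single_support)
      fix j j' assume j: "j < m" "j' < m"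
        and "a j * (g j x - g j y) \<noteq> 0" "a j' * (g j' x - g j' y) \<noteq> 0"
      hence "g j x \<noteq> 0 \<or> g j y \<noteq> 0" "g j' x \<noteq> 0 \<or> g j' y \<noteq> 0" by auto
      thus "j = j'" using separated[OF j] \<open>A x y\<close> sym by blast
    qed
    finally show ?thesis by (simp add: power_mult_distrib)
  qed
  have "dirichlet_sum W A ?G
      = (\<Sum>x\<in>W. \<Sum>y\<in>W. \<Sum>j<m. (a j)\<^sup>2 * (if A x y then (g j x - g j y)\<^sup>2 else 0))"
    unfolding dirichlet_sum_def by (intro sum.cong refl) (simp add: edge)
  also have "\<dots> = (\<Sum>j<m. (a j)\<^sup>2 * dirichlet_sum W A (g j))"
    unfolding dirichlet_sum_def sum_distrib_left
    by (subst sum.swap, subst (2) sum.swap) (rule refl)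
  finally have "2 * lap_form W A ?G = 2 * (\<Sum>j<m. (a j)\<^sup>2 * lap_form W A (g j))"
    by (simp add: dirichlet_sum_eq_twice_lap_form[OF graph] sum_distrib_left mult_ac)
  thus ?thesis by simp
qed

lemma combination_eq_zero_imp:
  assumes "\<forall>x\<in>W. (\<Sum>j<m. a j * g j x) = 0" and "j < m"
  shows "a j = 0"
proof (rule ccontr)
  assume "a j \<noteq> 0"
  obtain x where x: "g j x \<noteq> 0" using nonzero[OF \<open>j < m\<close>] by blast
  have "a j' * g j' x = 0" if "j' \<in> {..<m} - {j}" for j'
    using separated[of j j' x x] \<open>j < m\<close> x that by auto
  hence "(\<Sum>j'\<in>{..<m} - {j}. a j' * g j' x) = 0" by (intro sum.neutral) blast
  hence "(\<Sum>j<m. a j * g j x) = a j * g j x" using \<open>j < m\<close> by (simp add: sum.remove)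
  thus False using assms support[OF \<open>j < m\<close> x] x \<open>a j \<noteq> 0\<close> by simp
qed

lemma combination_coordinates:
  "(\<Sum>i<card W. \<Sum>l<card W. (\<Sum>j<m. a j * g j (sorted_list_of_set W ! i)) * laplacian_mat W A $$ (i,l)
      * (\<Sum>j<m. a j * g j (sorted_list_of_set W ! l))) = (\<Sum>j<m. (a j)\<^sup>2 * lap_form W A (g j))"
  "(\<Sum>i<card W. (\<Sum>j<m. a j * g j (sorted_list_of_set W ! i))\<^sup>2)
      = (\<Sum>j<m. (a j)\<^sup>2 * (\<Sum>x\<in>W. (g j x)\<^sup>2))"
  "\<forall>i<card W. (\<Sum>j<m. a j * g j (sorted_list_of_set W ! i)) = 0 \<Longrightarrow> \<forall>j<m. a j = 0"
proof -
  show "(\<Sum>i<card W. \<Sum>l<card W. (\<Sum>j<m. a j * g j (sorted_list_of_set W ! i)) * laplacian_mat W A $$ (i,l)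
      * (\<Sum>j<m. a j * g j (sorted_list_of_set W ! l))) = (\<Sum>j<m. (a j)\<^sup>2 * lap_form W A (g j))"
    using laplacian_mat_quadratic_form[OF finite_W, where f="\<lambda>x. \<Sum>j<m. a j * g j x" and A=A]
      lap_form_combination by simp
  show "(\<Sum>i<card W. (\<Sum>j<m. a j * g j (sorted_list_of_set W ! i))\<^sup>2)
      = (\<Sum>j<m. (a j)\<^sup>2 * (\<Sum>x\<in>W. (g j x)\<^sup>2))"
    using sum_sorted_list_of_set_nth[OF finite_W, where h="\<lambda>x. (\<Sum>j<m. a j * g j x)\<^sup>2"]
      norm_combination by simp
  assume zero: "\<forall>i<card W. (\<Sum>j<m. a j * g j (sorted_list_of_set W ! i)) = 0"
  have "\<forall>x\<in>W. (\<Sum>j<m. a j * g j x) = 0"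
  proof
    fix x assume "x \<in> W"
    hence "x \<in> set (sorted_list_of_set W)" using finite_W by simp
    then obtain i where "i < length (sorted_list_of_set W)" "sorted_list_of_set W ! i = x"
      by (auto simp: in_set_conv_nth)
    thus "(\<Sum>j<m. a j * g j x) = 0" using zero[rule_format, of i] by simp
  qed
  thus "\<forall>j<m. a j = 0" using combination_eq_zero_imp by blast
qed

lemma lap_eig_le_if_rayleigh_le:
  assumes ray: "\<And>j. j < m \<Longrightarrow> lap_form W A (g j) \<le> c * (\<Sum>x\<in>W. (g j x)\<^sup>2)"
  shows "lap_eig W A m \<le> c"
proof -
  obtain U e where rows: "\<And>i j. i < card W \<Longrightarrow> j < card W \<Longrightarrow> (\<Sum>k<card W. U i k * U j k) = (if i = j then 1 else 0)"
    and "\<And>i j. i < card W \<Longrightarrow> j < card W \<Longrightarrow> (\<Sum>k<card W. U k i * U k j) = (if i = j then 1 else 0)"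
    and ent: "\<And>i j. i < card W \<Longrightarrow> j < card W \<Longrightarrow> laplacian_mat W A $$ (i,j) = (\<Sum>k<card W. U i k * e k * U j k)"
    and eigs: "lap_eigs W A = sort (map e [0..<card W])"
    using laplacian_spectral_decomposition[OF graph] by blast
  have "m \<le> card {k. k < card W \<and> e k \<le> c}"
  proof (rule courant_fischer_count[OF rows ent combination_coordinates(3)])
    fix a
    have "(\<Sum>j<m. (a j)\<^sup>2 * lap_form W A (g j)) \<le> (\<Sum>j<m. (a j)\<^sup>2 * (c * (\<Sum>x\<in>W. (g j x)\<^sup>2)))"
      by (intro sum_mono mult_left_mono ray) auto
    thus "(\<Sum>i<card W. \<Sum>l<card W. (\<Sum>j<m. a j * g j (sorted_list_of_set W ! i)) * laplacian_mat W A $$ (i,l)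
        * (\<Sum>j<m. a j * g j (sorted_list_of_set W ! l)))
      \<le> c * (\<Sum>i<card W. (\<Sum>j<m. a j * g j (sorted_list_of_set W ! i))\<^sup>2)"
      unfolding combination_coordinates(1,2) by (simp add: sum_distrib_left mult_ac)
  qed
  hence "m \<le> card {i. i < length (lap_eigs W A) \<and> lap_eigs W A ! i \<le> c}"
    unfolding eigs using card_nth_sort_map_upt[of e "card W" "\<lambda>x. x \<le> c"] by simp
  thus ?thesis unfolding lap_eig_def
    by (rule sorted_nth_le_if_card_le[OF lap_eigs_sorted_length(1)[OF graph] m_pos])
qed

lemma lap_eig_ge_if_rayleigh_ge:
  assumes ray: "\<And>j. j < m \<Longrightarrow> c * (\<Sum>x\<in>W. (g j x)\<^sup>2) \<le> lap_form W A (g j)"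
  shows "c \<le> lap_eig W A (card W - m + 1)"
proof -
  obtain U e where rows: "\<And>i j. i < card W \<Longrightarrow> j < card W \<Longrightarrow> (\<Sum>k<card W. U i k * U j k) = (if i = j then 1 else 0)"
    and "\<And>i j. i < card W \<Longrightarrow> j < card W \<Longrightarrow> (\<Sum>k<card W. U k i * U k j) = (if i = j then 1 else 0)"
    and ent: "\<And>i j. i < card W \<Longrightarrow> j < card W \<Longrightarrow> laplacian_mat W A $$ (i,j) = (\<Sum>k<card W. U i k * e k * U j k)"
    and eigs: "lap_eigs W A = sort (map e [0..<card W])"
    using laplacian_spectral_decomposition[OF graph] by blast
  have ent': "- laplacian_mat W A $$ (i,j) = (\<Sum>k<card W. U i k * - e k * U j k)"
    if "i < card W" "j < card W" for i j
    using ent[OF that] by (simp add: sum_negf)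
  have "m \<le> card {k. k < card W \<and> - e k \<le> - c}"
  proof (rule courant_fischer_count[OF rows ent' combination_coordinates(3)])
    fix a
    have "(\<Sum>j<m. (a j)\<^sup>2 * (c * (\<Sum>x\<in>W. (g j x)\<^sup>2))) \<le> (\<Sum>j<m. (a j)\<^sup>2 * lap_form W A (g j))"
      by (intro sum_mono mult_left_mono ray) auto
    thus "(\<Sum>i<card W. \<Sum>l<card W. (\<Sum>j<m. a j * g j (sorted_list_of_set W ! i)) * - laplacian_mat W A $$ (i,l)
        * (\<Sum>j<m. a j * g j (sorted_list_of_set W ! l)))
      \<le> - c * (\<Sum>i<card W. (\<Sum>j<m. a j * g j (sorted_list_of_set W ! i))\<^sup>2)"
      using combination_coordinates(1,2)[of a] by (simp add: sum_negf sum_distrib_left mult_ac)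
  qed
  hence "m \<le> card {i. i < length (lap_eigs W A) \<and> c \<le> lap_eigs W A ! i}"
    unfolding eigs using card_nth_sort_map_upt[of e "card W" "\<lambda>x. c \<le> x"] by simp
  from sorted_nth_ge_if_card_ge[OF lap_eigs_sorted_length(1)[OF graph] m_pos this]
  show ?thesis unfolding lap_eig_def lap_eigs_sorted_length(2)[OF graph] by simp
qed

end

section \<open>Goldberg--Coxeter pieces\<close>

text \<open>Abstract setting of the Goldberg--Coxeter construction \<^const>\<open>gc_adj\<close>: \<open>nb c t\<close> is the
  neighbour of the cell \<open>c\<close> in direction \<open>t < d\<close> in the infinite lattice; it leaves the piece
  exactly across the sides of the piece.\<close>
locale gc_piece =
  fixes d k :: nat and V :: "'a::linorder set" and E :: "'a \<Rightarrow> 'a \<Rightarrow> bool"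
    and rot :: "'a \<Rightarrow> nat \<Rightarrow> 'a"
    and cells :: "'c::linorder set" and cadj :: "'c \<Rightarrow> 'c \<Rightarrow> bool" and bnd :: "nat \<Rightarrow> nat \<Rightarrow> 'c"
    and nb :: "'c \<Rightarrow> nat \<Rightarrow> 'c"
  assumes oriented: "oriented_regular d V E rot"
    and finite_cells: "finite cells"
    and cadj_sym: "\<And>c c'. cadj c c' \<Longrightarrow> cadj c' c"
    and cadj_irrefl: "\<And>c. \<not> cadj c c"
    and cadj_nb: "\<And>c c'. c \<in> cells \<Longrightarrow> c' \<in> cells \<Longrightarrow> cadj c c' \<Longrightarrow> \<exists>t<d. c' = nb c t"
    and nb_cadj: "\<And>c t. c \<in> cells \<Longrightarrow> t < d \<Longrightarrow> cadj c (nb c t)"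
    and nb_inj: "\<And>c. c \<in> cells \<Longrightarrow> inj_on (nb c) {..<d}"
    and bnd_nb_outside: "\<And>c s i. c \<in> cells \<Longrightarrow> s < d \<Longrightarrow> i < k \<Longrightarrow> c = bnd s i \<Longrightarrow> nb c s \<notin> cells"
    and bnd_inj: "\<And>s i i'. s < d \<Longrightarrow> i < k \<Longrightarrow> i' < k \<Longrightarrow> bnd s i = bnd s i' \<Longrightarrow> i = i'"
begin

abbreviation "W \<equiv> V \<times> cells"
abbreviation "Adj \<equiv> gc_adj d k V rot cells cadj bnd"

lemma finite_V: "finite V"
  using oriented unfolding oriented_regular_def simple_graph_def by auto

lemma finite_W: "finite W"
  using finite_V finite_cells by simp

lemma rot_adjacent: "p \<in> V \<Longrightarrow> s < d \<Longrightarrow> E p (rot p s)"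
  using oriented unfolding oriented_regular_def bij_betw_def by auto

lemma rot_inj: "p \<in> V \<Longrightarrow> s < d \<Longrightarrow> s' < d \<Longrightarrow> rot p s = rot p s' \<Longrightarrow> s = s'"
  using oriented unfolding oriented_regular_def bij_betw_def inj_on_def by auto

lemma Adj_in_W: "Adj x y \<Longrightarrow> x \<in> W \<and> y \<in> W"
  unfolding gc_adj_def by (cases x, cases y) auto

lemma undirected_graph_gc: "undirected_graph W Adj"
  unfolding undirected_graph_def
proof (intro conjI allI impI)
  show "finite W" by (rule finite_W)
next
  fix x y assume xy: "Adj x y"
  have in_W: "fst x \<in> V" "fst y \<in> V" "snd x \<in> cells" "snd y \<in> cells"
    using xy unfolding gc_adj_def by auto
  from xy consider "fst x = fst y" "cadj (snd x) (snd y)"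
    | s s' i where "s < d" "s' < d" "i < k" "rot (fst x) s = fst y" "rot (fst y) s' = fst x"
        "snd x = bnd s i" "snd y = bnd s' (k - 1 - i)"
    unfolding gc_adj_def by blast
  thus "Adj y x"
  proof cases
    case 1 thus ?thesis using in_W cadj_sym unfolding gc_adj_def by auto
  next
    case (2 s s' i)
    hence "rot (fst y) s' = fst x \<and> rot (fst x) s = fst y \<and>
        snd y = bnd s' (k - 1 - i) \<and> snd x = bnd s (k - 1 - (k - 1 - i))" by simp
    moreover have "k - 1 - i < k" using 2 by simp
    ultimately show ?thesis using in_W 2(1,2) unfolding gc_adj_def by blast
  qed
next
  fix x show "\<not> Adj x x"
  proof
    assume xx: "Adj x x"
    hence x: "fst x \<in> V" unfolding gc_adj_def by simp
    from xx consider "cadj (snd x) (snd x)" | s where "s < d" "rot (fst x) s = fst x"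
      unfolding gc_adj_def by blast
    thus False
    proof cases
      case 1 thus False using cadj_irrefl by blast
    next
      case (2 s)
      hence "E (fst x) (fst x)" using rot_adjacent[OF x] by metis
      thus False using oriented unfolding oriented_regular_def simple_graph_def by blast
    qed
  qed
qed

text \<open>Direction \<open>t\<close> either stays inside the piece, or it crosses side \<open>t\<close> into the piece
  of the neighbouring vertex \<open>rot p t\<close>.\<close>
lemma vdeg_le: "x \<in> W \<Longrightarrow> vdeg W Adj x \<le> d"
proof -
  assume "x \<in> W"
  then obtain p c where x: "x = (p, c)" and p: "p \<in> V" and c: "c \<in> cells" by auto
  define across where "across = (\<lambda>s. (rot p s, bnd (THE s'. s' < d \<and> rot (rot p s) s' = p)
      (k - 1 - (THE i. i < k \<and> c = bnd s i))))"
  define step where "step = (\<lambda>t. if nb c t \<in> cells then (p, nb c t) else across t)"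
  have "{z \<in> W. Adj x z} \<subseteq> step ` {..<d}"
  proof
    fix z assume "z \<in> {z \<in> W. Adj x z}"
    then obtain q c' where z: "z = (q, c')" and q: "q \<in> V" and c': "c' \<in> cells" and "Adj (p, c) (q, c')"
      unfolding x by auto
    then consider "p = q" "cadj c c'"
      | s s' i where "s < d" "s' < d" "i < k" "rot p s = q" "rot q s' = p"
          "c = bnd s i" "c' = bnd s' (k - 1 - i)"
      unfolding gc_adj_def by auto
    thus "z \<in> step ` {..<d}"
    proof cases
      case 1
      then obtain t where "t < d" "c' = nb c t" using cadj_nb[OF c c'] by blast
      thus ?thesis unfolding z step_def using 1 c' by force
    next
      case (2 s s' i)
      have "(THE s'. s' < d \<and> rot (rot p s) s' = p) = s'"
        using 2 rot_inj[OF q] by (intro the_equality) auto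
      moreover have "(THE i. i < k \<and> c = bnd s i) = i"
        using 2 bnd_inj[OF 2(1)] by (intro the_equality) auto
      ultimately have "step s = z"
        unfolding step_def across_def z using 2 bnd_nb_outside[OF c] by simp
      thus ?thesis using 2 by blast
    qed
  qed
  hence "vdeg W Adj x \<le> card (step ` {..<d})"
    unfolding vdeg_def by (intro card_mono) auto
  also have "\<dots> \<le> d" using card_image_le[of "{..<d}" step] by simp
  finally show ?thesis .
qed

lemma lap_eig_bounds:
  assumes "1 \<le> j" "j \<le> card W"
  shows "0 \<le> lap_eig W Adj j" and "lap_eig W Adj j \<le> 2 * real d"
  using lap_eigs_bounds[OF undirected_graph_gc vdeg_le, of "j - 1"] assms
  unfolding lap_eig_def by auto

definition interior :: "'c \<Rightarrow> bool" where
  "interior c \<longleftrightarrow> c \<in> cells \<and> (\<forall>s<d. \<forall>i<k. c \<noteq> bnd s i) \<and> (\<forall>t<d. nb c t \<in> cells)"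

lemma Adj_interior_iff:
  assumes p: "p \<in> V" and c: "interior c"
  shows "Adj (p, c) y \<longleftrightarrow> (\<exists>t<d. y = (p, nb c t))"
proof
  assume a: "Adj (p, c) y"
  then obtain c' where y: "y = (p, c')" and "cadj c c'" "c' \<in> cells"
    using c Adj_in_W[OF a] unfolding gc_adj_def interior_def by (cases y) auto
  thus "\<exists>t<d. y = (p, nb c t)" using cadj_nb[of c c'] c unfolding interior_def by auto
next
  assume "\<exists>t<d. y = (p, nb c t)"
  thus "Adj (p, c) y" unfolding gc_adj_def using p c nb_cadj unfolding interior_def by auto
qed

lemma interior_neighbours:
  assumes p: "p \<in> V" and c: "interior c"
  shows "{z \<in> W. Adj (p, c) z} = (\<lambda>t. (p, nb c t)) ` {..<d}"
  using Adj_interior_iff[OF p c] Adj_in_W[of "(p, c)"] p c unfolding interior_def by auto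

lemma vdeg_interior:
  assumes p: "p \<in> V" and c: "interior c"
  shows "vdeg W Adj (p, c) = d"
proof -
  have "inj_on (\<lambda>t. (p, nb c t)) {..<d}"
    using nb_inj[of c] c unfolding interior_def inj_on_def by auto
  thus ?thesis unfolding vdeg_def interior_neighbours[OF p c] by (simp add: card_image)
qed

end

definition block_fun :: "'a \<Rightarrow> 'c set \<Rightarrow> ('c \<Rightarrow> real) \<Rightarrow> 'a \<times> 'c \<Rightarrow> real" where
  "block_fun p B h x = (if fst x = p \<and> snd x \<in> B then h (snd x) else 0)"

definition boundary_count :: "nat \<Rightarrow> ('c \<Rightarrow> nat \<Rightarrow> 'c) \<Rightarrow> 'c set \<Rightarrow> real" where
  "boundary_count d nb B = (\<Sum>c\<in>B. real (card {t. t < d \<and> nb c t \<notin> B}))"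

lemma boundary_count_le:
  assumes "finite B" and "\<And>c t. c \<in> B \<Longrightarrow> t < d \<Longrightarrow> nb c t \<notin> B \<Longrightarrow> c \<in> F"
  shows "boundary_count d nb B \<le> real d * card (B \<inter> F)"
proof -
  have "real (card {t. t < d \<and> nb c t \<notin> B}) \<le> (if c \<in> F then real d else 0)" if "c \<in> B" for c
  proof (cases "c \<in> F")
    case True
    have "card {t. t < d \<and> nb c t \<notin> B} \<le> card {..<d}" by (intro card_mono) auto
    thus ?thesis using True by simp
  qed (use assms(2) that in auto)
  hence "boundary_count d nb B \<le> (\<Sum>c\<in>B. if c \<in> F then real d else 0)"
    unfolding boundary_count_def by (rule sum_mono)
  also have "\<dots> = real d * card (B \<inter> F)" using assms(1) by (simp add: sum.If_cases)
  finally show ?thesis .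
qed

context gc_piece
begin

lemma sum_block:
  assumes p: "p \<in> V" and B: "B \<subseteq> cells" and F: "\<And>x. x \<notin> Pair p ` B \<Longrightarrow> F x = 0"
  shows "(\<Sum>x\<in>W. F x) = (\<Sum>c\<in>B. F (p, c))"
proof -
  have "(\<Sum>x\<in>W. F x) = (\<Sum>x\<in>Pair p ` B. F x)"
    by (rule sum.mono_neutral_right) (use finite_W p B F in auto)
  also have "\<dots> = (\<Sum>c\<in>B. F (p, c))" by (subst sum.reindex) (auto simp: inj_on_def)
  finally show ?thesis .
qed

lemma norm_block_fun:
  assumes p: "p \<in> V" and B: "B \<subseteq> Collect interior" and h: "\<And>c. c \<in> B \<Longrightarrow> (h c)\<^sup>2 = 1"
  shows "(\<Sum>x\<in>W. (block_fun p B h x)\<^sup>2) = card B"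
proof -
  have "(\<Sum>x\<in>W. (block_fun p B h x)\<^sup>2) = (\<Sum>c\<in>B. (block_fun p B h (p, c))\<^sup>2)"
    using B by (intro sum_block[OF p]) (auto simp: interior_def block_fun_def image_iff)
  also have "\<dots> = (\<Sum>c\<in>B. 1)" by (intro sum.cong refl) (use h in \<open>auto simp: block_fun_def\<close>)
  finally show ?thesis by simp
qed

text \<open>If \<open>h\<close> takes values \<open>\<pm>1\<close> and \<open>h c * h c' = \<kappa>\<close> for neighbouring cells of \<open>B\<close>, then only the
  edges leaving \<open>B\<close> spoil the value \<open>(1 - \<kappa>) d |B|\<close> of the Laplacian form.\<close>
lemma lap_form_block_fun:
  assumes p: "p \<in> V" and B: "B \<subseteq> Collect interior"
    and h: "\<And>c. c \<in> B \<Longrightarrow> (h c)\<^sup>2 = 1"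
    and \<kappa>: "\<And>c t. c \<in> B \<Longrightarrow> t < d \<Longrightarrow> nb c t \<in> B \<Longrightarrow> h c * h (nb c t) = \<kappa>"
  shows "lap_form W Adj (block_fun p B h)
    = real d * card B - \<kappa> * (real d * card B - boundary_count d nb B)"
proof -
  let ?g = "block_fun p B h"
  have Bc: "B \<subseteq> cells" using B unfolding interior_def by auto
  have off: "\<And>x. x \<notin> Pair p ` B \<Longrightarrow> ?g x = 0" by (auto simp: block_fun_def image_iff)
  have "(\<Sum>x\<in>W. real (vdeg W Adj x) * (?g x)\<^sup>2) = (\<Sum>c\<in>B. real (vdeg W Adj (p, c)) * (?g (p, c))\<^sup>2)"
    by (rule sum_block[OF p Bc]) (simp add: off)
  also have "\<dots> = (\<Sum>c\<in>B. real d)"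
    by (intro sum.cong refl) (use vdeg_interior[OF p] B h in \<open>auto simp: block_fun_def\<close>)
  finally have diagonal: "(\<Sum>x\<in>W. real (vdeg W Adj x) * (?g x)\<^sup>2) = real d * card B" by simp
  have inner: "(\<Sum>y\<in>W. if Adj (p, c) y then ?g (p, c) * ?g y else 0)
      = \<kappa> * real (card {t. t < d \<and> nb c t \<in> B})" if c: "c \<in> B" for c
  proof -
    have ic: "interior c" using c B by auto
    have "(\<Sum>y\<in>W. if Adj (p, c) y then ?g (p, c) * ?g y else 0)
        = (\<Sum>y\<in>(\<lambda>t. (p, nb c t)) ` {..<d}. ?g (p, c) * ?g y)"
      unfolding interior_neighbours[OF p ic, symmetric] using finite_W by (simp add: sum.inter_filter)
    also have "\<dots> = (\<Sum>t<d. ?g (p, c) * ?g (p, nb c t))"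
      by (subst sum.reindex) (use nb_inj[of c] ic in \<open>auto simp: interior_def inj_on_def\<close>)
    also have "\<dots> = (\<Sum>t<d. if nb c t \<in> B then \<kappa> else 0)"
      by (intro sum.cong refl) (use c \<kappa> in \<open>auto simp: block_fun_def\<close>)
    finally show ?thesis by (simp add: sum.If_cases Int_def)
  qed
  have "(\<Sum>x\<in>W. \<Sum>y\<in>W. if Adj x y then ?g x * ?g y else 0)
      = (\<Sum>c\<in>B. \<Sum>y\<in>W. if Adj (p, c) y then ?g (p, c) * ?g y else 0)"
  proof (rule sum_block[OF p Bc])
    fix x assume "x \<notin> Pair p ` B"
    hence "?g x = 0" by (rule off)
    thus "(\<Sum>y\<in>W. if Adj x y then ?g x * ?g y else 0) = 0"
      by (simp only: mult_zero_left if_cancel sum.neutral_const)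
  qed
  also have "\<dots> = (\<Sum>c\<in>B. \<kappa> * real (card {t. t < d \<and> nb c t \<in> B}))"
    by (intro sum.cong refl inner)
  also have "\<dots> = \<kappa> * (\<Sum>c\<in>B. real d - real (card {t. t < d \<and> nb c t \<notin> B}))"
  proof -
    have "real (card {t. t < d \<and> nb c t \<in> B}) = real d - real (card {t. t < d \<and> nb c t \<notin> B})" for c
    proof -
      have "card {t. t < d \<and> nb c t \<in> B} + card {t. t < d \<and> nb c t \<notin> B}
          = card ({t. t < d \<and> nb c t \<in> B} \<union> {t. t < d \<and> nb c t \<notin> B})"
        by (rule card_Un_disjoint[symmetric]) auto
      also have "{t. t < d \<and> nb c t \<in> B} \<union> {t. t < d \<and> nb c t \<notin> B} = {..<d}" by auto
      finally have "real (card {t. t < d \<and> nb c t \<in> B} + card {t. t < d \<and> nb c t \<notin> B}) = real d"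
        by simp
      thus ?thesis by simp
    qed
    thus ?thesis by (simp add: sum_distrib_left)
  qed
  finally show ?thesis
    unfolding lap_form_eq[OF undirected_graph_gc] diagonal boundary_count_def
    by (simp add: sum_subtractf)
qed

lemma separated_test_functions_blocks:
  fixes Bs :: "nat \<Rightarrow> 'c set" and h :: "'c \<Rightarrow> real"
  assumes p: "p \<in> V"
    and interior: "\<And>j. j < m \<Longrightarrow> Bs j \<subseteq> Collect interior"
    and nonempty: "\<And>j. j < m \<Longrightarrow> Bs j \<noteq> {}"
    and separated: "\<And>j j' c c'. j < m \<Longrightarrow> j' < m \<Longrightarrow> j \<noteq> j' \<Longrightarrow> c \<in> Bs j \<Longrightarrow> c' \<in> Bs j' \<Longrightarrow>
        c \<noteq> c' \<and> (\<forall>t<d. nb c t \<noteq> c')"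
    and m: "1 \<le> m" and h: "\<And>c. (h c)\<^sup>2 = 1"
  shows "separated_test_functions W Adj m (\<lambda>j. block_fun p (Bs j) h)"
proof
  fix j j' x y assume j: "j < m" "j' < m" "j \<noteq> j'"
    and "block_fun p (Bs j) h x \<noteq> 0" "block_fun p (Bs j') h y \<noteq> 0"
  then obtain c c' where x: "x = (p, c)" "c \<in> Bs j" and y: "y = (p, c')" "c' \<in> Bs j'"
    unfolding block_fun_def by (cases x, cases y) (auto split: if_splits)
  have "interior c" using interior[OF j(1)] x by auto
  thus "x \<noteq> y \<and> \<not> Adj x y"
    unfolding x y using Adj_interior_iff[OF p] separated[OF j x(2) y(2)] by auto
next
  fix j x assume j: "j < m" and "block_fun p (Bs j) h x \<noteq> 0"
  hence "fst x = p" "snd x \<in> Bs j" by (auto simp: block_fun_def split: if_splits)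
  thus "x \<in> W" using p interior[OF j] unfolding interior_def by (cases x) auto
next
  fix j assume "j < m"
  then obtain c where "c \<in> Bs j" using nonempty by blast
  thus "\<exists>x. block_fun p (Bs j) h x \<noteq> 0"
    using h[of c] by (intro exI[of _ "(p, c)"]) (auto simp: block_fun_def)
qed (use undirected_graph_gc m in auto)

lemma card_W_ge_blocks:
  fixes Bs :: "nat \<Rightarrow> 'c set"
  assumes p: "p \<in> V"
    and interior: "\<And>j. j < m \<Longrightarrow> Bs j \<subseteq> Collect interior"
    and nonempty: "\<And>j. j < m \<Longrightarrow> Bs j \<noteq> {}"
    and separated: "\<And>j j' c c'. j < m \<Longrightarrow> j' < m \<Longrightarrow> j \<noteq> j' \<Longrightarrow> c \<in> Bs j \<Longrightarrow> c' \<in> Bs j' \<Longrightarrow>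
        c \<noteq> c' \<and> (\<forall>t<d. nb c t \<noteq> c')"
  shows "m \<le> card W"
proof -
  define c where "c j = (SOME c. c \<in> Bs j)" for j
  have c: "c j \<in> Bs j" if "j < m" for j
    unfolding c_def using nonempty[OF that] by (simp add: some_in_eq)
  have "inj_on (\<lambda>j. (p, c j)) {..<m}"
  proof (rule inj_onI)
    fix j j' assume "j \<in> {..<m}" "j' \<in> {..<m}" "(p, c j) = (p, c j')"
    thus "j = j'" using separated[of j j' "c j" "c j'"] c by (cases "j = j'") auto
  qed
  moreover have "(\<lambda>j. (p, c j)) ` {..<m} \<subseteq> W"
    using p c interior unfolding interior_def by blast
  ultimately show ?thesis using card_inj_on_le[OF _ _ finite_W] by fastforce
qed

text \<open>Test with the constant function \<open>1\<close> on each block for the bottom of the spectrum, and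
  with a \<open>\<pm>1\<close> colouring \<open>h\<close> that alternates between neighbouring cells for the top.\<close>
theorem lap_eig_bounds_from_blocks:
  fixes Bs :: "nat \<Rightarrow> 'c set" and h :: "'c \<Rightarrow> real" and \<epsilon> :: real
  assumes p: "p \<in> V"
    and interior: "\<And>j. j < m \<Longrightarrow> Bs j \<subseteq> Collect interior"
    and nonempty: "\<And>j. j < m \<Longrightarrow> Bs j \<noteq> {}"
    and separated: "\<And>j j' c c'. j < m \<Longrightarrow> j' < m \<Longrightarrow> j \<noteq> j' \<Longrightarrow> c \<in> Bs j \<Longrightarrow> c' \<in> Bs j' \<Longrightarrow>
        c \<noteq> c' \<and> (\<forall>t<d. nb c t \<noteq> c')"
    and m: "1 \<le> m"
    and boundary: "\<And>j. j < m \<Longrightarrow> boundary_count d nb (Bs j) \<le> \<epsilon> * card (Bs j)"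
    and h: "\<And>c. (h c)\<^sup>2 = 1"
    and h_alternates: "\<And>c t. t < d \<Longrightarrow> h c * h (nb c t) = -1"
  shows "lap_eig W Adj m \<le> \<epsilon>"
    and "2 * real d - \<epsilon> \<le> lap_eig W Adj (card W - m + 1)"
    and "m \<le> card W"
proof -
  have test: "separated_test_functions W Adj m (\<lambda>j. block_fun p (Bs j) h')"
    if "\<And>c. (h' c)\<^sup>2 = 1" for h'
    using p interior nonempty separated m that by (rule separated_test_functions_blocks)
  show "lap_eig W Adj m \<le> \<epsilon>"
  proof (rule separated_test_functions.lap_eig_le_if_rayleigh_le[OF test])
    fix j assume j: "j < m"
    show "lap_form W Adj (block_fun p (Bs j) (\<lambda>_. 1))
      \<le> \<epsilon> * (\<Sum>x\<in>W. (block_fun p (Bs j) (\<lambda>_. 1) x)\<^sup>2)"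
      using lap_form_block_fun[OF p interior[OF j], of "\<lambda>_. 1" 1] boundary[OF j]
        norm_block_fun[OF p interior[OF j], of "\<lambda>_. 1"] by simp
  qed simp
  show "2 * real d - \<epsilon> \<le> lap_eig W Adj (card W - m + 1)"
  proof (rule separated_test_functions.lap_eig_ge_if_rayleigh_ge[OF test[OF h]])
    fix j assume j: "j < m"
    show "(2 * real d - \<epsilon>) * (\<Sum>x\<in>W. (block_fun p (Bs j) h x)\<^sup>2) \<le> lap_form W Adj (block_fun p (Bs j) h)"
      using lap_form_block_fun[OF p interior[OF j], of h "-1"] boundary[OF j]
        norm_block_fun[OF p interior[OF j], of h] h h_alternates by (simp add: algebra_simps)
  qed
  show "m \<le> card W" by (rule card_W_ge_blocks[OF p interior nonempty separated])
qed

end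

section \<open>The square and the triangular lattice\<close>

definition grid_square :: "int \<Rightarrow> int \<Rightarrow> nat \<Rightarrow> (int \<times> int) set" where
  "grid_square a b R = {a..<a + int R} \<times> {b..<b + int R}"

definition grid_frame :: "int \<Rightarrow> int \<Rightarrow> nat \<Rightarrow> (int \<times> int) set" where
  "grid_frame a b R = ({a, a + int R - 1} \<times> {b..<b + int R}) \<union> ({a..<a + int R} \<times> {b, b + int R - 1})"

lemma card_grid_square: "card (grid_square a b R) = R * R"
  unfolding grid_square_def by (simp add: card_cartesian_product)

lemma finite_grid_frame: "finite (grid_frame a b R)"
  unfolding grid_frame_def by simp

lemma card_grid_frame: "card (grid_frame a b R) \<le> 4 * R"
proof -
  have "card {x, y :: int} \<le> 2" for x y by (cases "x = y") auto
  hence "card (grid_frame a b R) \<le> 2 * R + R * 2"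
    unfolding grid_frame_def
    by (intro order.trans[OF card_Un_le] add_mono) (simp_all add: card_cartesian_product)
  thus ?thesis by simp
qed

lemma grid_square_step:
  assumes "(x, y) \<in> grid_square a b R" "(x, y) \<notin> grid_frame a b R"
    and "\<bar>x' - x\<bar> \<le> 1" "\<bar>y' - y\<bar> \<le> 1"
  shows "(x', y') \<in> grid_square a b R"
  using assms unfolding grid_square_def grid_frame_def by auto

lemma grid_offsets_far:
  fixes u u' :: nat and x x' M :: int
  assumes "u \<noteq> u'" "int R + 2 \<le> M"
    "1 + int u * M \<le> x" "x < 1 + int u * M + int R" "1 + int u' * M \<le> x'" "x' < 1 + int u' * M + int R"
  shows "2 \<le> \<bar>x - x'\<bar>"
proof (cases "u < u'")
  case True
  hence "(int u + 1) * M \<le> int u' * M" using assms(2) by (intro mult_right_mono) auto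
  thus ?thesis using assms by (simp add: algebra_simps)
next
  case False
  hence "(int u' + 1) * M \<le> int u * M" using assms(1,2) by (intro mult_right_mono) auto
  thus ?thesis using assms by (simp add: algebra_simps)
qed

text \<open>The squares are placed on a \<open>J \<times> J\<close> grid of mesh \<open>R + 2\<close>, where \<open>J = k div (2 (R + 2))\<close>.\<close>
lemma separated_grid_squares:
  fixes k R m :: nat
  assumes m: "m \<le> (k div (2 * (R + 2)))\<^sup>2"
  obtains a b :: "nat \<Rightarrow> int" where
    "\<And>j x y. j < m \<Longrightarrow> (x, y) \<in> grid_square (a j) (b j) R \<Longrightarrow> 1 \<le> x \<and> 1 \<le> y \<and> x + y + 2 \<le> int k"
    "\<And>j j' x y x' y'. j < m \<Longrightarrow> j' < m \<Longrightarrow> j \<noteq> j' \<Longrightarrow> (x, y) \<in> grid_square (a j) (b j) R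
      \<Longrightarrow> (x', y') \<in> grid_square (a j') (b j') R \<Longrightarrow> 2 \<le> \<bar>x - x'\<bar> \<or> 2 \<le> \<bar>y - y'\<bar>"
proof -
  define J where "J = k div (2 * (R + 2))"
  define M where "M = int R + 2"
  have JM: "2 * (int J * M) \<le> int k"
  proof -
    have "J * (2 * (R + 2)) \<le> k" unfolding J_def by (rule div_times_less_eq_dividend)
    hence "int (J * (2 * (R + 2))) \<le> int k" by (simp only: of_nat_le_iff)
    thus ?thesis unfolding M_def by (simp add: algebra_simps)
  qed
  have coords: "j div J < J" "j mod J < J" if "j < m" for j
  proof -
    have "j < J * J" using that m unfolding J_def power2_eq_square by simp
    hence "0 < J" by (cases J) auto
    thus "j div J < J" "j mod J < J" using \<open>j < J * J\<close> by (simp_all add: less_mult_imp_div_less)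
  qed
  have offset: "(int u + 1) * M \<le> int J * M" if "u < J" for u
    using that unfolding M_def by (intro mult_right_mono) auto
  show thesis
  proof (rule that[of "\<lambda>j. 1 + int (j div J) * M" "\<lambda>j. 1 + int (j mod J) * M"])
    fix j x y assume j: "j < m" and xy: "(x, y) \<in> grid_square (1 + int (j div J) * M) (1 + int (j mod J) * M) R"
    have "int (j div J) * M + M \<le> int J * M" "int (j mod J) * M + M \<le> int J * M"
      using offset[OF coords(1)[OF j]] offset[OF coords(2)[OF j]] by (simp_all add: distrib_right)
    hence "int (j div J) * M + int R + 2 \<le> int J * M" "int (j mod J) * M + int R + 2 \<le> int J * M"
      unfolding M_def by linarith+
    moreover have "0 \<le> int (j div J) * M" "0 \<le> int (j mod J) * M" unfolding M_def by auto
    moreover have "1 + int (j div J) * M \<le> x" "x < 1 + int (j div J) * M + int R"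
      "1 + int (j mod J) * M \<le> y" "y < 1 + int (j mod J) * M + int R"
      using xy unfolding grid_square_def by auto
    ultimately show "1 \<le> x \<and> 1 \<le> y \<and> x + y + 2 \<le> int k" using JM by linarith
  next
    fix j j' x y x' y' assume j: "j < m" "j' < m" "j \<noteq> j'"
      and "(x, y) \<in> grid_square (1 + int (j div J) * M) (1 + int (j mod J) * M) R"
      and "(x', y') \<in> grid_square (1 + int (j' div J) * M) (1 + int (j' mod J) * M) R"
    moreover have "j div J \<noteq> j' div J \<or> j mod J \<noteq> j' mod J"
      using j by (metis div_mult_mod_eq)
    ultimately show "2 \<le> \<bar>x - x'\<bar> \<or> 2 \<le> \<bar>y - y'\<bar>"
      unfolding grid_square_def using grid_offsets_far[where M=M and R=R] M_def by auto
  qed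
qed

definition sq_nb :: "int \<times> int \<Rightarrow> nat \<Rightarrow> int \<times> int" where
  "sq_nb c t = (if t = 0 then (fst c, snd c - 1) else if t = 1 then (fst c + 1, snd c)
     else if t = 2 then (fst c, snd c + 1) else (fst c - 1, snd c))"

lemma sq_gc_piece:
  assumes "oriented_regular 4 V E rot"
  shows "gc_piece 4 k V E rot (sq_cells k) sq_adj (sq_bnd k) sq_nb"
proof
  show "oriented_regular 4 V E rot" by fact
  show "finite (sq_cells k)"
    by (rule finite_subset[of _ "{0..<int k} \<times> {0..<int k}"]) (auto simp: sq_cells_def)
  show "\<And>c c'. sq_adj c c' \<Longrightarrow> sq_adj c' c" unfolding sq_adj_def by auto
  show "\<And>c. \<not> sq_adj c c" unfolding sq_adj_def by auto
  show "\<And>c c'. c \<in> sq_cells k \<Longrightarrow> c' \<in> sq_cells k \<Longrightarrow> sq_adj c c' \<Longrightarrow> \<exists>t<4. c' = sq_nb c t"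
  proof -
    fix c c' :: "int \<times> int" assume "sq_adj c c'"
    hence h: "\<bar>fst c - fst c'\<bar> + \<bar>snd c - snd c'\<bar> = 1" unfolding sq_adj_def .
    have "c' = sq_nb c 0 \<or> c' = sq_nb c 1 \<or> c' = sq_nb c 2 \<or> c' = sq_nb c 3"
      using h unfolding sq_nb_def by (cases c, cases c') (auto simp: abs_if split: if_splits)
    thus "\<exists>t<4. c' = sq_nb c t"
    proof (elim disjE)
      assume "c' = sq_nb c 0" thus ?thesis by (intro exI[of _ 0]) auto
    next
      assume "c' = sq_nb c 1" thus ?thesis by (intro exI[of _ 1]) auto
    next
      assume "c' = sq_nb c 2" thus ?thesis by (intro exI[of _ 2]) auto
    next
      assume "c' = sq_nb c 3" thus ?thesis by (intro exI[of _ 3]) auto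
    qed
  qed
  show "\<And>c t. c \<in> sq_cells k \<Longrightarrow> t < 4 \<Longrightarrow> sq_adj c (sq_nb c t)"
    unfolding sq_adj_def sq_nb_def by auto
  show "\<And>c. c \<in> sq_cells k \<Longrightarrow> inj_on (sq_nb c) {..<4}"
    unfolding inj_on_def sq_nb_def by (auto split: if_splits)
  show "\<And>c s i. c \<in> sq_cells k \<Longrightarrow> s < 4 \<Longrightarrow> i < k \<Longrightarrow> c = sq_bnd k s i \<Longrightarrow> sq_nb c s \<notin> sq_cells k"
    unfolding sq_bnd_def sq_nb_def sq_cells_def by (auto split: if_splits)
  show "\<And>s i i'. s < 4 \<Longrightarrow> i < k \<Longrightarrow> i' < k \<Longrightarrow> sq_bnd k s i = sq_bnd k s i' \<Longrightarrow> i = i'"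
    unfolding sq_bnd_def by (auto split: if_splits)
qed

lemma sq_nb_step: "\<bar>fst (sq_nb c t) - fst c\<bar> \<le> 1 \<and> \<bar>snd (sq_nb c t) - snd c\<bar> \<le> 1"
  unfolding sq_nb_def by auto

lemma sq_boundary_count:
  "boundary_count 4 sq_nb (grid_square a b R) \<le> 16 * real R"
proof -
  have "boundary_count 4 sq_nb (grid_square a b R) \<le> real 4 * card (grid_square a b R \<inter> grid_frame a b R)"
  proof (rule boundary_count_le)
    show "finite (grid_square a b R)" unfolding grid_square_def by simp
    fix c t assume "c \<in> grid_square a b R" "sq_nb c t \<notin> grid_square a b R"
    thus "c \<in> grid_frame a b R"
      using grid_square_step[of "fst c" "snd c" a b R "fst (sq_nb c t)" "snd (sq_nb c t)"] sq_nb_step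
      by auto
  qed
  also have "card (grid_square a b R \<inter> grid_frame a b R) \<le> card (grid_frame a b R)"
    by (rule card_mono[OF finite_grid_frame]) auto
  also have "\<dots> \<le> 4 * R" by (rule card_grid_frame)
  finally show ?thesis by simp
qed

theorem sq_lap_eig_bounds:
  assumes oriented: "oriented_regular 4 V E rot"
    and R: "1 \<le> R" and m: "1 \<le> m" and mJ: "m \<le> (k div (2 * (R + 2)))\<^sup>2"
  shows "lap_eig (V \<times> sq_cells k) (gc_adj 4 k V rot (sq_cells k) sq_adj (sq_bnd k)) m \<le> 16 / real R \<and>
    2 * real 4 - 16 / real R \<le> lap_eig (V \<times> sq_cells k) (gc_adj 4 k V rot (sq_cells k) sq_adj (sq_bnd k))
      (card (V \<times> sq_cells k) - m + 1) \<and> m \<le> card (V \<times> sq_cells k)"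
proof -
  interpret gc_piece 4 k V E rot "sq_cells k" sq_adj "sq_bnd k" sq_nb
    by (rule sq_gc_piece[OF oriented])
  obtain p where p: "p \<in> V"
    using oriented unfolding oriented_regular_def connected_graph_def by auto
  obtain a b where inside: "\<And>j x y. j < m \<Longrightarrow> (x, y) \<in> grid_square (a j) (b j) R \<Longrightarrow> 1 \<le> x \<and> 1 \<le> y \<and> x + y + 2 \<le> int k"
    and apart: "\<And>j j' x y x' y'. j < m \<Longrightarrow> j' < m \<Longrightarrow> j \<noteq> j' \<Longrightarrow> (x, y) \<in> grid_square (a j) (b j) R
      \<Longrightarrow> (x', y') \<in> grid_square (a j') (b j') R \<Longrightarrow> 2 \<le> \<bar>x - x'\<bar> \<or> 2 \<le> \<bar>y - y'\<bar>"
    using separated_grid_squares[OF mJ] by blast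
  define h where "h c = (if even (fst c + snd c) then 1 else (-1::real))" for c :: "int \<times> int"
  let ?B = "\<lambda>j. grid_square (a j) (b j) R"
  have interior: "?B j \<subseteq> Collect interior" if "j < m" for j
  proof
    fix c assume "c \<in> ?B j"
    hence "1 \<le> fst c" "1 \<le> snd c" "fst c + snd c + 2 \<le> int k"
      using inside[OF that, of "fst c" "snd c"] by auto
    thus "c \<in> Collect interior" unfolding mem_Collect_eq interior_def
      by (auto simp: sq_cells_def sq_bnd_def sq_nb_def)
  qed
  have nonempty: "?B j \<noteq> {}" for j using R unfolding grid_square_def by auto
  have separated: "c \<noteq> c' \<and> (\<forall>t<4. sq_nb c t \<noteq> c')"
    if "j < m" "j' < m" "j \<noteq> j'" "c \<in> ?B j" "c' \<in> ?B j'" for j j' c c'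
  proof -
    have far: "2 \<le> \<bar>fst c - fst c'\<bar> \<or> 2 \<le> \<bar>snd c - snd c'\<bar>"
      using apart[OF that(1-3), of "fst c" "snd c" "fst c'" "snd c'"] that(4,5) by simp
    have "sq_nb c t \<noteq> c'" for t
      using far sq_nb_step[of c t] by (smt (verit))
    thus ?thesis using far by auto
  qed
  have boundary: "boundary_count 4 sq_nb (?B j) \<le> 16 / real R * card (?B j)" for j
    using sq_boundary_count[of "a j" "b j" R] R by (simp add: card_grid_square field_simps)
  have h: "(h c)\<^sup>2 = 1" for c unfolding h_def by simp
  have h_alternates: "h c * h (sq_nb c t) = -1" for c t
  proof -
    have "even (fst (sq_nb c t) + snd (sq_nb c t)) \<longleftrightarrow> \<not> even (fst c + snd c)"
      unfolding sq_nb_def by (auto simp: algebra_simps)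
    thus ?thesis unfolding h_def by auto
  qed
  show ?thesis
    using lap_eig_bounds_from_blocks[OF p interior nonempty separated m boundary h h_alternates] by simp
qed

text \<open>Leaving the triangle \<open>T\<close> in direction \<open>t\<close> crosses its side \<open>t\<close>, as numbered by
  \<^const>\<open>tri_bnd\<close>.\<close>
definition tri_nb :: "int \<times> int \<times> bool \<Rightarrow> nat \<Rightarrow> int \<times> int \<times> bool" where
  "tri_nb c t = (case c of (a, b, u) \<Rightarrow>
     if u then (if t = 0 then (a + 1, b - 1, False) else if t = 1 then (a + 1, b, False) else (a, b, False))
     else (if t = 0 then (a, b, True) else if t = 1 then (a - 1, b, True) else (a - 1, b + 1, True)))"

lemma tri_nb_up: "tri_nb (a, b, True) t = (if t = 0 then (a + 1, b - 1, False) else if t = 1 then (a + 1, b, False) else (a, b, False))"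
  unfolding tri_nb_def by simp
lemma tri_nb_down: "tri_nb (a, b, False) t = (if t = 0 then (a, b, True) else if t = 1 then (a - 1, b, True) else (a - 1, b + 1, True))"
  unfolding tri_nb_def by simp

lemma tri_cells_up: "(a, b, True) \<in> tri_cells k \<longleftrightarrow> 0 \<le> a \<and> 0 \<le> b \<and> a + b + 1 \<le> int k"
  unfolding tri_cells_def tri_T_def by auto
lemma tri_cells_down: "(a, b, False) \<in> tri_cells k \<longleftrightarrow> 1 \<le> a \<and> 0 \<le> b \<and> a + b + 1 \<le> int k"
  unfolding tri_cells_def tri_T_def by auto

lemma tri_adj_imp_tri_nb:
  assumes "tri_adj c c'"
  shows "c' = tri_nb c 0 \<or> c' = tri_nb c 1 \<or> c' = tri_nb c 2"
proof -
  have ne: "c \<noteq> c'" and c2: "card (tri_verts c \<inter> tri_verts c') = 2" using assms unfolding tri_adj_def by auto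
  obtain x y where S: "tri_verts c \<inter> tri_verts c' = {x, y}" and "x \<noteq> y"
    using c2 card_2_iff[of "tri_verts c \<inter> tri_verts c'"] by blast
  hence xy: "x \<noteq> y" "x \<in> tri_verts c" "x \<in> tri_verts c'" "y \<in> tri_verts c" "y \<in> tri_verts c'"
    by blast+
  obtain a b u where c: "c = (a, b, u)" by (cases c)
  obtain a' b' u' where c': "c' = (a', b', u')" by (cases c')
  show ?thesis using xy ne unfolding c c'
    by (cases u; cases u') (auto simp: tri_nb_up tri_nb_down)
qed

lemma tri_adjI: "c \<noteq> c' \<Longrightarrow> tri_verts c \<inter> tri_verts c' = {p, q} \<Longrightarrow> p \<noteq> q \<Longrightarrow> tri_adj c c'"
  unfolding tri_adj_def by simp

lemma tri_adj_tri_nb: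
  assumes "t < 3"
  shows "tri_adj c (tri_nb c t)"
proof -
  obtain a b u where c: "c = (a, b, u)" by (cases c)
  have t: "t = 0 \<or> t = 1 \<or> t = 2" using assms by auto
  show ?thesis
  proof (cases u)
    case True
    hence cT: "c = (a, b, True)" using c by simp
    from t show ?thesis
    proof (elim disjE)
      assume t0: "t = 0"
      show ?thesis unfolding cT tri_nb_up using t0
        by (simp, intro tri_adjI[of _ _ "(a, b)" "(a + 1, b)"]) auto
    next
      assume t0: "t = 1"
      show ?thesis unfolding cT tri_nb_up using t0
        by (simp, intro tri_adjI[of _ _ "(a + 1, b)" "(a, b + 1)"]) auto
    next
      assume t0: "t = 2"
      show ?thesis unfolding cT tri_nb_up using t0
        by (simp, intro tri_adjI[of _ _ "(a, b)" "(a, b + 1)"]) auto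
    qed
  next
    case False
    hence cT: "c = (a, b, False)" using c by simp
    from t show ?thesis
    proof (elim disjE)
      assume t0: "t = 0"
      show ?thesis unfolding cT tri_nb_down using t0
        by (simp, intro tri_adjI[of _ _ "(a, b)" "(a, b + 1)"]) auto
    next
      assume t0: "t = 1"
      show ?thesis unfolding cT tri_nb_down using t0
        by (simp, intro tri_adjI[of _ _ "(a, b)" "(a - 1, b + 1)"]) auto
    next
      assume t0: "t = 2"
      show ?thesis unfolding cT tri_nb_down using t0
        by (simp, intro tri_adjI[of _ _ "(a, b + 1)" "(a - 1, b + 1)"]) auto
    qed
  qed
qed

lemma tri_gc_piece:
  assumes "oriented_regular 3 V E rot"
  shows "gc_piece 3 k V E rot (tri_cells k) tri_adj (tri_bnd k) tri_nb"
proof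
  show "oriented_regular 3 V E rot" by fact
  show "finite (tri_cells k)"
  proof (rule finite_subset[of _ "{0..int k} \<times> {0..int k} \<times> UNIV"])
    show "tri_cells k \<subseteq> {0..int k} \<times> {0..int k} \<times> UNIV"
    proof
      fix c assume c: "c \<in> tri_cells k"
      obtain a b u where abu: "c = (a, b, u)" by (cases c)
      show "c \<in> {0..int k} \<times> {0..int k} \<times> UNIV"
        using c unfolding abu by (cases u) (auto simp: tri_cells_up tri_cells_down)
    qed
  qed simp
  show "\<And>c c'. tri_adj c c' \<Longrightarrow> tri_adj c' c" unfolding tri_adj_def by (auto simp: Int_commute)
  show "\<And>c. \<not> tri_adj c c" unfolding tri_adj_def by auto
  show "\<And>c c'. c \<in> tri_cells k \<Longrightarrow> c' \<in> tri_cells k \<Longrightarrow> tri_adj c c' \<Longrightarrow> \<exists>t<3. c' = tri_nb c t"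
  proof -
    fix c c' assume "tri_adj c c'"
    hence "c' = tri_nb c 0 \<or> c' = tri_nb c 1 \<or> c' = tri_nb c 2" by (rule tri_adj_imp_tri_nb)
    thus "\<exists>t<3. c' = tri_nb c t"
    proof (elim disjE)
      assume "c' = tri_nb c 0" thus ?thesis by (intro exI[of _ 0]) auto
    next
      assume "c' = tri_nb c 1" thus ?thesis by (intro exI[of _ 1]) auto
    next
      assume "c' = tri_nb c 2" thus ?thesis by (intro exI[of _ 2]) auto
    qed
  qed
  show "\<And>c t. c \<in> tri_cells k \<Longrightarrow> t < 3 \<Longrightarrow> tri_adj c (tri_nb c t)" by (rule tri_adj_tri_nb)
  show "\<And>c. c \<in> tri_cells k \<Longrightarrow> inj_on (tri_nb c) {..<3}"
  proof -
    fix c :: "int \<times> int \<times> bool"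
    obtain a b u where c: "c = (a, b, u)" by (cases c)
    show "inj_on (tri_nb c) {..<3}" unfolding c inj_on_def
      by (cases u) (auto simp: tri_nb_up tri_nb_down split: if_splits)
  qed
  show "\<And>c s i. c \<in> tri_cells k \<Longrightarrow> s < 3 \<Longrightarrow> i < k \<Longrightarrow> c = tri_bnd k s i \<Longrightarrow> tri_nb c s \<notin> tri_cells k"
  proof -
    fix c s i assume s: "s < (3::nat)" and i: "i < k" and c: "c = tri_bnd k s i"
    have "s = 0 \<or> s = 1 \<or> s = 2" using s by auto
    thus "tri_nb c s \<notin> tri_cells k"
    proof (elim disjE)
      assume "s = 0" thus ?thesis using c by (simp add: tri_bnd_def tri_nb_up tri_cells_down)
    next
      assume "s = 1" thus ?thesis using c by (simp add: tri_bnd_def tri_nb_up tri_cells_down)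
    next
      assume "s = 2" thus ?thesis using c by (simp add: tri_bnd_def tri_nb_up tri_cells_down)
    qed
  qed
  show "\<And>s i i'. s < 3 \<Longrightarrow> i < k \<Longrightarrow> i' < k \<Longrightarrow> tri_bnd k s i = tri_bnd k s i' \<Longrightarrow> i = i'"
    unfolding tri_bnd_def by (auto split: if_splits)
qed

lemma tri_nb_step:
  "\<bar>fst (tri_nb c t) - fst c\<bar> \<le> 1 \<and> \<bar>fst (snd (tri_nb c t)) - fst (snd c)\<bar> \<le> 1"
  by (cases c) (auto simp: tri_nb_def)

definition tri_lift :: "(int \<times> int) set \<Rightarrow> (int \<times> int \<times> bool) set" where
  "tri_lift S = {(x, y, u). (x, y) \<in> S}"

lemma tri_lift_eq_image: "tri_lift S = (\<lambda>((x, y), u). (x, y, u)) ` (S \<times> UNIV)"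
  unfolding tri_lift_def by force

lemma card_tri_lift: "finite S \<Longrightarrow> card (tri_lift S) = 2 * card S"
  unfolding tri_lift_eq_image by (subst card_image) (auto simp: inj_on_def card_cartesian_product)

lemma tri_boundary_count:
  "boundary_count 3 tri_nb (tri_lift (grid_square a b R)) \<le> 24 * real R"
proof -
  let ?B = "tri_lift (grid_square a b R)"
  have "boundary_count 3 tri_nb ?B \<le> real 3 * card (?B \<inter> tri_lift (grid_frame a b R))"
  proof (rule boundary_count_le)
    show "finite ?B" unfolding tri_lift_eq_image grid_square_def by simp
    fix c t assume "c \<in> ?B" "tri_nb c t \<notin> ?B"
    thus "c \<in> tri_lift (grid_frame a b R)"
      using grid_square_step[of "fst c" "fst (snd c)" a b R "fst (tri_nb c t)" "fst (snd (tri_nb c t))"]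
        tri_nb_step[of c t] unfolding tri_lift_def by (auto split: prod.splits)
  qed
  also have "card (?B \<inter> tri_lift (grid_frame a b R)) \<le> 2 * (4 * R)"
    using card_mono[of "tri_lift (grid_frame a b R)" "?B \<inter> tri_lift (grid_frame a b R)"]
      card_tri_lift[OF finite_grid_frame] card_grid_frame[of a b R]
    unfolding tri_lift_eq_image by (auto simp: finite_grid_frame)
  finally show ?thesis by simp
qed

theorem tri_lap_eig_bounds:
  assumes oriented: "oriented_regular 3 V E rot"
    and R: "1 \<le> R" and m: "1 \<le> m" and mJ: "m \<le> (k div (2 * (R + 2)))\<^sup>2"
  shows "lap_eig (V \<times> tri_cells k) (gc_adj 3 k V rot (tri_cells k) tri_adj (tri_bnd k)) m \<le> 12 / real R \<and>
    2 * real 3 - 12 / real R \<le> lap_eig (V \<times> tri_cells k) (gc_adj 3 k V rot (tri_cells k) tri_adj (tri_bnd k))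
      (card (V \<times> tri_cells k) - m + 1) \<and> m \<le> card (V \<times> tri_cells k)"
proof -
  interpret gc_piece 3 k V E rot "tri_cells k" tri_adj "tri_bnd k" tri_nb
    by (rule tri_gc_piece[OF oriented])
  obtain p where p: "p \<in> V"
    using oriented unfolding oriented_regular_def connected_graph_def by auto
  obtain a b where inside: "\<And>j x y. j < m \<Longrightarrow> (x, y) \<in> grid_square (a j) (b j) R \<Longrightarrow> 1 \<le> x \<and> 1 \<le> y \<and> x + y + 2 \<le> int k"
    and apart: "\<And>j j' x y x' y'. j < m \<Longrightarrow> j' < m \<Longrightarrow> j \<noteq> j' \<Longrightarrow> (x, y) \<in> grid_square (a j) (b j) R
      \<Longrightarrow> (x', y') \<in> grid_square (a j') (b j') R \<Longrightarrow> 2 \<le> \<bar>x - x'\<bar> \<or> 2 \<le> \<bar>y - y'\<bar>"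
    using separated_grid_squares[OF mJ] by blast
  define h where "h c = (if snd (snd c) then 1 else (-1::real))" for c :: "int \<times> int \<times> bool"
  let ?B = "\<lambda>j. tri_lift (grid_square (a j) (b j) R)"
  have interior: "?B j \<subseteq> Collect interior" if "j < m" for j
  proof
    fix c assume "c \<in> ?B j"
    then obtain x y u where c: "c = (x, y, u)" and "(x, y) \<in> grid_square (a j) (b j) R"
      unfolding tri_lift_def by auto
    hence "1 \<le> x" "1 \<le> y" "x + y + 2 \<le> int k" using inside[OF that] by auto
    thus "c \<in> Collect interior" unfolding c mem_Collect_eq interior_def
      by (cases u) (auto simp: tri_cells_up tri_cells_down tri_bnd_def tri_nb_up tri_nb_down)
  qed
  have nonempty: "?B j \<noteq> {}" for j
  proof -
    have "(a j, b j, True) \<in> ?B j" using R unfolding tri_lift_def grid_square_def by simp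
    thus ?thesis by blast
  qed
  have separated: "c \<noteq> c' \<and> (\<forall>t<3. tri_nb c t \<noteq> c')"
    if "j < m" "j' < m" "j \<noteq> j'" "c \<in> ?B j" "c' \<in> ?B j'" for j j' c c'
  proof -
    have "(fst c, fst (snd c)) \<in> grid_square (a j) (b j) R" "(fst c', fst (snd c')) \<in> grid_square (a j') (b j') R"
      using that(4,5) unfolding tri_lift_def by auto
    hence far: "2 \<le> \<bar>fst c - fst c'\<bar> \<or> 2 \<le> \<bar>fst (snd c) - fst (snd c')\<bar>"
      using apart[OF that(1-3)] by blast
    have "tri_nb c t \<noteq> c'" for t
      using far tri_nb_step[of c t] by (smt (verit))
    thus ?thesis using far by auto
  qed
  have boundary: "boundary_count 3 tri_nb (?B j) \<le> 12 / real R * card (?B j)" for j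
  proof -
    have "card (?B j) = 2 * (R * R)"
      using card_tri_lift[of "grid_square (a j) (b j) R"] card_grid_square
      unfolding grid_square_def by simp
    thus ?thesis using tri_boundary_count[of "a j" "b j" R] R by (simp add: field_simps)
  qed
  have h: "(h c)\<^sup>2 = 1" for c unfolding h_def by simp
  have h_alternates: "h c * h (tri_nb c t) = -1" for c t
    unfolding h_def by (cases c) (auto simp: tri_nb_def)
  show ?thesis
    using lap_eig_bounds_from_blocks[OF p interior nonempty separated m boundary h h_alternates] by simp
qed

lemma eventually_le_power2_div:
  fixes m :: "nat \<Rightarrow> nat" and M :: nat
  assumes m_lim: "(\<lambda>k. real (m k) / (real k)\<^sup>2) \<longlonglongrightarrow> 0" and M: "0 < M"
  shows "eventually (\<lambda>k. m k \<le> (k div M)\<^sup>2) sequentially"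
proof -
  have "eventually (\<lambda>k. real (m k) / (real k)\<^sup>2 < 1 / (2 * real M)\<^sup>2) sequentially"
    using m_lim M by (intro order_tendstoD(2)) auto
  moreover have "eventually (\<lambda>k. 2 * M \<le> k) sequentially" by (rule eventually_ge_at_top)
  ultimately show ?thesis
  proof eventually_elim
    case (elim k)
    have k: "0 < real k" using elim(2) M by simp
    have "k = k div M * M + k mod M" by (rule div_mult_mod_eq[symmetric])
    moreover have "k mod M < M" using M by simp
    moreover have "(k div M + 1) * M = k div M * M + M" by (simp add: distrib_right)
    ultimately have "k < (k div M + 1) * M" by linarith
    hence "real k < real ((k div M + 1) * M)" by (simp only: of_nat_less_iff)
    hence "real k < (real (k div M) + 1) * real M" by (simp add: algebra_simps)
    hence "real k / real M - 1 < real (k div M)" using M by (simp add: field_simps)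
    moreover have "1 \<le> real k / (2 * real M)" using elim(2) M by (simp add: field_simps)
    ultimately have "real k / (2 * real M) \<le> real (k div M)" by (simp add: field_simps)
    hence "(real k / (2 * real M))\<^sup>2 \<le> (real (k div M))\<^sup>2" using k M by (intro power_mono) auto
    moreover have "real (m k) < (real k / (2 * real M))\<^sup>2"
      using elim(1) k by (simp add: field_simps power2_eq_square)
    ultimately have "real (m k) < (real (k div M))\<^sup>2" by linarith
    hence "m k < (k div M)\<^sup>2" by (metis of_nat_less_iff of_nat_power)
    thus ?case by simp
  qed
qed

lemma tendsto_from_block_bounds:
  fixes lo hi :: "nat \<Rightarrow> real" and m :: "nat \<Rightarrow> nat"
  assumes m_lim: "(\<lambda>k. real (m k) / (real k)\<^sup>2) \<longlonglongrightarrow> 0" and C: "0 < C"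
    and bounds: "\<And>R k. 1 \<le> R \<Longrightarrow> 1 \<le> k \<Longrightarrow> m k \<le> (k div (2 * (R + 2)))\<^sup>2 \<Longrightarrow>
       0 \<le> lo k \<and> lo k \<le> C / real R \<and> L - C / real R \<le> hi k \<and> hi k \<le> L"
  shows "lo \<longlonglongrightarrow> 0" and "hi \<longlonglongrightarrow> L"
proof -
  have close: "eventually (\<lambda>k. \<bar>lo k\<bar> < r \<and> \<bar>hi k - L\<bar> < r) sequentially" if r: "0 < r" for r
  proof -
    obtain n :: nat where "C / r < real n" using reals_Archimedean2 by blast
    hence R: "1 \<le> n + 1" "C / real (n + 1) < r" using r C by (auto simp: field_simps)
    have "eventually (\<lambda>k. m k \<le> (k div (2 * (n + 1 + 2)))\<^sup>2) sequentially"
      by (rule eventually_le_power2_div[OF m_lim]) simp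
    moreover have "eventually (\<lambda>k. 1 \<le> k) sequentially" by (rule eventually_ge_at_top)
    ultimately show ?thesis
    proof eventually_elim
      case (elim k)
      with bounds[OF R(1) elim(2,1)] R(2) show ?case by linarith
    qed
  qed
  show "lo \<longlonglongrightarrow> 0" unfolding tendsto_iff dist_real_def
  proof (intro allI impI)
    fix r :: real assume "0 < r"
    from close[OF this] show "eventually (\<lambda>k. \<bar>lo k - 0\<bar> < r) sequentially"
      by (rule eventually_mono) simp
  qed
  show "hi \<longlonglongrightarrow> L" unfolding tendsto_iff dist_real_def
  proof (intro allI impI)
    fix r :: real assume "0 < r"
    from close[OF this] show "eventually (\<lambda>k. \<bar>hi k - L\<bar> < r) sequentially"
      by (rule eventually_mono) simp
  qed
qed

theorem gc_lap_eig_limits: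
  fixes cells :: "nat \<Rightarrow> 'c::linorder set" and bnd :: "nat \<Rightarrow> nat \<Rightarrow> nat \<Rightarrow> 'c"
  assumes gc: "\<And>k. gc_piece d k V E rot (cells k) cadj (bnd k) nb"
    and m_pos: "\<forall>k\<ge>1. 0 < m k"
    and m_lim: "(\<lambda>k. real (m k) / (real k)\<^sup>2) \<longlonglongrightarrow> 0"
    and C: "0 < C"
    and blocks: "\<And>R k. 1 \<le> R \<Longrightarrow> 1 \<le> m k \<Longrightarrow> m k \<le> (k div (2 * (R + 2)))\<^sup>2 \<Longrightarrow>
      lap_eig (V \<times> cells k) (gc_adj d k V rot (cells k) cadj (bnd k)) (m k) \<le> C / real R \<and>
      2 * real d - C / real R \<le> lap_eig (V \<times> cells k) (gc_adj d k V rot (cells k) cadj (bnd k))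
        (card (V \<times> cells k) - m k + 1) \<and> m k \<le> card (V \<times> cells k)"
  shows "(\<lambda>k. lap_eig (V \<times> cells k) (gc_adj d k V rot (cells k) cadj (bnd k)) (m k)) \<longlonglongrightarrow> 0"
    and "(\<lambda>k. lap_eig (V \<times> cells k) (gc_adj d k V rot (cells k) cadj (bnd k))
          (card (V \<times> cells k) - m k + 1)) \<longlonglongrightarrow> 2 * real d"
proof -
  have bounds: "0 \<le> lap_eig (V \<times> cells k) (gc_adj d k V rot (cells k) cadj (bnd k)) (m k) \<and>
      lap_eig (V \<times> cells k) (gc_adj d k V rot (cells k) cadj (bnd k)) (m k) \<le> C / real R \<and>
      2 * real d - C / real R \<le> lap_eig (V \<times> cells k) (gc_adj d k V rot (cells k) cadj (bnd k))
        (card (V \<times> cells k) - m k + 1) \<and>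
      lap_eig (V \<times> cells k) (gc_adj d k V rot (cells k) cadj (bnd k)) (card (V \<times> cells k) - m k + 1)
        \<le> 2 * real d"
    if R: "1 \<le> R" and k: "1 \<le> k" and mJ: "m k \<le> (k div (2 * (R + 2)))\<^sup>2" for R k
  proof -
    interpret gc_piece d k V E rot "cells k" cadj "bnd k" nb by (rule gc)
    have m: "1 \<le> m k" using m_pos k by auto
    note block_bounds = blocks[OF R m mJ]
    have "m k \<le> card W" using block_bounds by simp
    hence "0 \<le> lap_eig W Adj (m k)" and "lap_eig W Adj (card W - m k + 1) \<le> 2 * real d"
      using lap_eig_bounds(1)[OF m] lap_eig_bounds(2)[of "card W - m k + 1"] m by simp_all
    thus ?thesis using block_bounds by simp
  qed
  show "(\<lambda>k. lap_eig (V \<times> cells k) (gc_adj d k V rot (cells k) cadj (bnd k)) (m k)) \<longlonglongrightarrow> 0"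
    by (rule tendsto_from_block_bounds(1)[OF m_lim C bounds])
  show "(\<lambda>k. lap_eig (V \<times> cells k) (gc_adj d k V rot (cells k) cadj (bnd k))
      (card (V \<times> cells k) - m k + 1)) \<longlonglongrightarrow> 2 * real d"
    by (rule tendsto_from_block_bounds(2)[OF m_lim C bounds])
qed

theorem theorem1p1:
  fixes V :: "'a::linorder set" and E :: "'a \<Rightarrow> 'a \<Rightarrow> bool"
    and rot :: "'a \<Rightarrow> nat \<Rightarrow> 'a" and m :: "nat \<Rightarrow> nat"
  assumes m_pos: "\<forall>k\<ge>1. 0 < m k"
    and m_lim: "(\<lambda>k. real (m k) / (real k)\<^sup>2) \<longlonglongrightarrow> 0"
  shows "(oriented_regular 3 V E rot \<longrightarrow>
           ((\<lambda>k. lap_eig (GC3_vertices k V) (GC3_adj k V rot) (m k)) \<longlonglongrightarrow> 0) \<and>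
           ((\<lambda>k. lap_eig (GC3_vertices k V) (GC3_adj k V rot)
                   (card (GC3_vertices k V) - m k + 1)) \<longlonglongrightarrow> 6))
       \<and> (oriented_regular 4 V E rot \<longrightarrow>
           ((\<lambda>k. lap_eig (GC4_vertices k V) (GC4_adj k V rot) (m k)) \<longlonglongrightarrow> 0) \<and>
           ((\<lambda>k. lap_eig (GC4_vertices k V) (GC4_adj k V rot)
                   (card (GC4_vertices k V) - m k + 1)) \<longlonglongrightarrow> 8))"
proof (intro conjI impI)
  assume oriented: "oriented_regular 3 V E rot"
  note limits = gc_lap_eig_limits[OF tri_gc_piece[OF oriented] m_pos m_lim _ tri_lap_eig_bounds[OF oriented]]
  show "(\<lambda>k. lap_eig (GC3_vertices k V) (GC3_adj k V rot) (m k)) \<longlonglongrightarrow> 0"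
    "(\<lambda>k. lap_eig (GC3_vertices k V) (GC3_adj k V rot) (card (GC3_vertices k V) - m k + 1)) \<longlonglongrightarrow> 6"
    using limits unfolding GC3_vertices_def GC3_adj_def by simp_all
next
  assume oriented: "oriented_regular 4 V E rot"
  note limits = gc_lap_eig_limits[OF sq_gc_piece[OF oriented] m_pos m_lim _ sq_lap_eig_bounds[OF oriented]]
  show "(\<lambda>k. lap_eig (GC4_vertices k V) (GC4_adj k V rot) (m k)) \<longlonglongrightarrow> 0"
    "(\<lambda>k. lap_eig (GC4_vertices k V) (GC4_adj k V rot) (card (GC4_vertices k V) - m k + 1)) \<longlonglongrightarrow> 8"
    using limits unfolding GC4_vertices_def GC4_adj_def by simp_all
qed

end
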